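(* Let $k$ be an algebraically closed field of characteristic zero and let $\mathcal{X}_g: Y^2=F(X,Z)$ be a hyperelliptic curve of genus $g$ over $k$, with $F$ a binary form of degree $d=2g+2$, such that $\overline{\mathrm{Aut}}(\mathcal{X}_g)\cong A_5$. Then $I_4=I_4'=I_6=I_6'=I_{12}=0$.
   Context: For a hyperelliptic curve $\mathcal{X}_g$ with hyperelliptic involution $z_0$, $\overline{\mathrm{Aut}}(\mathcal{X}_g):=\mathrm{Aut}(\mathcal{X}_g)/\langle z_0\rangle$ (when this is $A_5$ one has $d\ge 12$, so all invariants below are defined). The curve $Y^2=F(X)$ is identified with the binary form $F(X,Z)=\sum_{i=0}^d a_iX^iZ^{d-i}$ of degree $d=2g+2$ (the homogenization to degree $2g+2$). For binary forms $f$ of degree $n$ and $h$ of degree $m$ and an integer $0\le r\le\min(m,n)$, the $r$-th transvectant is $$(f,h)^r:=\frac{(m-r)!\,(n-r)!}{n!\,m!}\sum_{j=0}^r(-1)^j\binom{r}{j}\frac{\partial^r f}{\partial X^{r-j}\partial Z^{j}}\cdot\frac{\partial^r h}{\partial X^{j}\partial Z^{r-j}},$$ a binary form of degree $m+n-2r$. Define $J_{4j}:=(F,F)^{d-2j}$ for $j=1,\dots,g$, and $I_4:=(J_4,J_4)^4$, $I_4':=(J_8,J_8)^8$, $I_6:=((F,J_4)^4,(F,J_4)^4)^{d-4}$, $I_6':=((F,J_8)^8,(F,J_8)^8)^{d-8}$, $M:=((F,J_4)^4,(F,J_8)^8)^{d-10}$ (a form of degree 8), and $I_{12}:=(M,M)^8$.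 *)

theory Defs
  imports "HOL-Computational_Algebra.Polynomial" "HOL-Algebra.Sym_Groups"
begin

text \<open>Binary forms in X, Z are represented as elements of 'a poly poly:
  the outer variable is X, the inner variable (in the coefficients) is Z.\<close>

definition homog :: "nat \<Rightarrow> 'a::field poly \<Rightarrow> 'a poly poly" where
  "homog d f = (\<Sum>i\<le>d. monom (monom (coeff f i) (d - i)) i)"

definition dX :: "nat \<Rightarrow> 'a::field poly poly \<Rightarrow> 'a poly poly" where
  "dX k = pderiv ^^ k"

definition dZ :: "nat \<Rightarrow> 'a::field poly poly \<Rightarrow> 'a poly poly" where
  "dZ k = map_poly pderiv ^^ k"

definition transvectant ::
  "nat \<Rightarrow> nat \<Rightarrow> nat \<Rightarrow> 'a::field poly poly \<Rightarrow> 'a poly poly \<Rightarrow> 'a poly poly" where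
  "transvectant n m r f h =
     smult [: of_nat (fact (m - r) * fact (n - r)) / of_nat (fact n * fact m) :]
       (\<Sum>j\<le>r. of_int ((-1) ^ j * int (r choose j)) *
                 dX (r - j) (dZ j f) * dX j (dZ (r - j) h))"

definition linf :: "'a::field \<Rightarrow> 'a \<Rightarrow> 'a poly poly" where
  "linf a b = [: [:0, b:], [:a:] :]"

text \<open>F^M(X,Z) = F(aX+bZ, cX+eZ) for M = (a,b,c,e), F = homogenisation of f to degree d.\<close>
definition form_subst :: "nat \<Rightarrow> 'a::field poly \<Rightarrow> 'a \<times> 'a \<times> 'a \<times> 'a \<Rightarrow> 'a poly poly" where
  "form_subst d f M = (case M of (a, b, c, e) \<Rightarrow>
     (\<Sum>i\<le>d. smult [:coeff f i:] (linf a b ^ i * linf c e ^ (d - i))))"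

definition mat_mult :: "'a::field \<times> 'a \<times> 'a \<times> 'a \<Rightarrow> 'a \<times> 'a \<times> 'a \<times> 'a \<Rightarrow> 'a \<times> 'a \<times> 'a \<times> 'a" where
  "mat_mult M N = (case M of (a, b, c, e) \<Rightarrow> case N of (a', b', c', e') \<Rightarrow>
     (a * a' + b * c', a * b' + b * e', c * a' + e * c', c * b' + e * e'))"

definition mat_det :: "'a::field \<times> 'a \<times> 'a \<times> 'a \<Rightarrow> 'a" where
  "mat_det M = (case M of (a, b, c, e) \<Rightarrow> a * e - b * c)"

definition proj_class :: "'a::field \<times> 'a \<times> 'a \<times> 'a \<Rightarrow> ('a \<times> 'a \<times> 'a \<times> 'a) set" where
  "proj_class M = {N. \<exists>t. t \<noteq> 0 \<and> N = (case M of (a, b, c, e) \<Rightarrow> (t * a, t * b, t * c, t * e))}"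

definition form_stab :: "nat \<Rightarrow> 'a::field poly \<Rightarrow> ('a \<times> 'a \<times> 'a \<times> 'a) set" where
  "form_stab d f = {M. mat_det M \<noteq> 0 \<and>
      (\<exists>lam. lam \<noteq> 0 \<and> form_subst d f M = smult [:lam:] (homog d f))}"

text \<open>Reduced automorphism group Aut(X)/<z0>, realised as the subgroup of PGL_2(k)
  preserving the binary form F up to scalars.\<close>
definition red_aut_group :: "nat \<Rightarrow> 'a::field poly \<Rightarrow> ('a \<times> 'a \<times> 'a \<times> 'a) set monoid" where
  "red_aut_group d f =
     \<lparr> carrier = proj_class ` form_stab d f,
       mult = (\<lambda>A B. proj_class (mat_mult (SOME M. M \<in> A) (SOME N. N \<in> B))),
       one = proj_class (1, 0, 0, 1) \<rparr>"

text \<open>Hyperelliptic curve Y^2 = F(X,Z) of genus g: F of degree 2g+2 without repeated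
  linear factors; dehomogenised f has degree 2g+1 or 2g+2 and distinct roots.\<close>
definition hyperelliptic :: "nat \<Rightarrow> 'a::field poly \<Rightarrow> bool" where
  "hyperelliptic g f \<longleftrightarrow> g \<ge> 2 \<and> (degree f = 2 * g + 2 \<or> degree f = 2 * g + 1) \<and> rsquarefree f"

definition J4 :: "nat \<Rightarrow> 'a::field poly \<Rightarrow> 'a poly poly" where
  "J4 d f = transvectant d d (d - 2) (homog d f) (homog d f)"
definition J8 :: "nat \<Rightarrow> 'a::field poly \<Rightarrow> 'a poly poly" where
  "J8 d f = transvectant d d (d - 4) (homog d f) (homog d f)"

definition I4 :: "nat \<Rightarrow> 'a::field poly \<Rightarrow> 'a poly poly" where
  "I4 d f = transvectant 4 4 4 (J4 d f) (J4 d f)"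
definition I4' :: "nat \<Rightarrow> 'a::field poly \<Rightarrow> 'a poly poly" where
  "I4' d f = transvectant 8 8 8 (J8 d f) (J8 d f)"

definition FJ4 :: "nat \<Rightarrow> 'a::field poly \<Rightarrow> 'a poly poly" where
  "FJ4 d f = transvectant d 4 4 (homog d f) (J4 d f)"
definition FJ8 :: "nat \<Rightarrow> 'a::field poly \<Rightarrow> 'a poly poly" where
  "FJ8 d f = transvectant d 8 8 (homog d f) (J8 d f)"

definition I6 :: "nat \<Rightarrow> 'a::field poly \<Rightarrow> 'a poly poly" where
  "I6 d f = transvectant (d - 4) (d - 4) (d - 4) (FJ4 d f) (FJ4 d f)"
definition I6' :: "nat \<Rightarrow> 'a::field poly \<Rightarrow> 'a poly poly" where
  "I6' d f = transvectant (d - 8) (d - 8) (d - 8) (FJ8 d f) (FJ8 d f)"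

definition Mform :: "nat \<Rightarrow> 'a::field poly \<Rightarrow> 'a poly poly" where
  "Mform d f = transvectant (d - 4) (d - 8) (d - 10) (FJ4 d f) (FJ8 d f)"
definition I12 :: "nat \<Rightarrow> 'a::field poly \<Rightarrow> 'a poly poly" where
  "I12 d f = transvectant 8 8 8 (Mform d f) (Mform d f)"

end

theory Submission
  imports Defs "HOL-Algebra.Group_Action"
begin

text \<open>The transvectants \<open>J\<^sub>4 = (F,F)\<^sup>d\<^sup>-\<^sup>2\<close> and \<open>J\<^sub>8 = (F,F)\<^sup>d\<^sup>-\<^sup>4\<close> are covariants of degree 4 and 8:
  a matrix that fixes \<open>F\<close> up to a scalar fixes them up to a scalar. Their zero sets on the
  projective line are therefore unions of orbits of the reduced automorphism group \<open>A\<^sub>5\<close>. A point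
  stabiliser embeds into \<open>k\<^sup>*\<close> via \<open>\<lambda>\<^sup>2 / det\<close>, where \<open>\<lambda>\<close> is the eigenvalue at the fixed point; as
  elements of \<open>A\<^sub>5\<close> have order 1, 2, 3 or 5, it has at most 9 elements. Since 60 is not a product of
  two numbers \<open>\<le> 9\<close>, every orbit has more than 9 points. A nonzero form of degree at most 8 has at
  most 9 zeros, so \<open>J\<^sub>4 = J\<^sub>8 = 0\<close>, and each of the invariants is a transvectant with \<open>J\<^sub>4\<close> or \<open>J\<^sub>8\<close>
  as an argument.\<close>

section \<open>Even permutations of five points have order 1, 2, 3 or 5\<close>

lemma funpow_comp_commute:
  assumes "f \<circ> g = g \<circ> f"
  shows "(f \<circ> g) ^^ n = f ^^ n \<circ> g ^^ n"
proof -
  have c: "g \<circ> f ^^ n = f ^^ n \<circ> g" for n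
    by (induction n) (simp_all add: fun_eq_iff, metis assms comp_apply)
  show ?thesis
    by (induction n) (simp_all add: fun_eq_iff, metis c comp_apply)
qed

lemma permutes_disjoint_commute:
  assumes "f permutes A" "g permutes B" "A \<inter> B = {}"
  shows "f \<circ> g = g \<circ> f"
proof
  fix x
  consider "x \<in> A" | "x \<in> B" | "x \<notin> A" "x \<notin> B" by blast
  then show "(f \<circ> g) x = (g \<circ> f) x"
  proof cases
    case 1
    then have "g x = x" "g (f x) = f x"
      using assms by (meson disjoint_iff permutes_in_image permutes_not_in)+
    then show ?thesis by simp
  next
    case 2
    then have "f x = x" "f (g x) = g x"
      using assms by (meson disjoint_iff permutes_in_image permutes_not_in)+
    then show ?thesis by simp
  next
    case 3
    then show ?thesis using assms by (simp add: permutes_not_in)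
  qed
qed

lemma cycle_of_list_funpow_eq_id:
  assumes "cycle cs" "length cs dvd n"
  shows "cycle_of_list cs ^^ n = id"
proof
  fix x
  show "(cycle_of_list cs ^^ n) x = id x"
  proof (cases "x \<in> set cs")
    case True
    have "map (cycle_of_list cs ^^ n) cs = rotate n cs"
      using cyclic_rotation[OF assms(1)] by blast
    also have "\<dots> = cs" using assms(2) by (simp add: rotate_id dvd_eq_mod_eq_0)
    finally have "map (cycle_of_list cs ^^ n) cs = cs" .
    then show ?thesis using True by (metis id_apply in_set_conv_nth nth_map length_map)
  next
    case False
    have "(cycle_of_list cs ^^ n) permutes set cs"
      by (simp add: cycle_permutes permutes_funpow)
    then show ?thesis using False by (simp add: permutes_not_in)
  qed
qed

lemma cycle_of_list_short: "length cs \<le> 1 \<Longrightarrow> cycle_of_list cs = id"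
  by (cases cs rule: cycle_of_list.cases) auto

lemma cycle_decomp_permutes:
  assumes "cycle_decomp S p"
  shows "p permutes S \<and> finite S"
  using assms
proof induction
  case empty
  show ?case using permutes_id[of "{}"] by (simp add: id_def)
next
  case (comp I p cs)
  have "cycle_of_list cs permutes set cs \<union> I"
    using cycle_permutes by (rule permutes_subset) auto
  moreover have "p permutes set cs \<union> I"
    using comp.IH by (auto intro: permutes_subset)
  ultimately show ?case
    using comp.IH permutes_compose[of p "set cs \<union> I" "cycle_of_list cs"] by (simp add: comp_def)
qed

lemma cycle_decomp_cycle_lengths:
  assumes "cycle_decomp S p"
  shows "\<exists>ls. sum_list ls = card S \<and>
           (\<forall>k. (\<forall>L\<in>set ls. 2 \<le> L \<longrightarrow> L dvd k) \<longrightarrow> p ^^ k = id) \<and>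
           (evenperm p \<longleftrightarrow> even (\<Sum>L\<leftarrow>ls. L - 1))"
  using assms
proof induction
  case empty
  show ?case by (rule exI[of _ "[]"]) (simp only: id_funpow evenperm_id; simp)
next
  case (comp I p cs)
  then obtain ls where ls: "sum_list ls = card I"
     "\<forall>k. (\<forall>L\<in>set ls. 2 \<le> L \<longrightarrow> L dvd k) \<longrightarrow> p ^^ k = id"
     "evenperm p \<longleftrightarrow> even (\<Sum>L\<leftarrow>ls. L - 1)" by blast
  let ?c = "cycle_of_list cs"
  have p: "p permutes I" "finite I" using cycle_decomp_permutes[OF comp.hyps(1)] by auto
  have comm: "?c \<circ> p = p \<circ> ?c"
    using permutes_disjoint_commute[OF cycle_permutes p(1) comp.hyps(3)] .
  have card: "card (set cs \<union> I) = length cs + card I"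
    using comp.hyps(2,3) p(2) by (simp add: card_Un_disjoint distinct_card)
  have ev: "evenperm ?c \<longleftrightarrow> even (length cs - 1)"
    using swapidseq_ext_imp_swapidseq[OF swapidseq_ext_of_cycles[OF comp.hyps(2)]]
    by (simp add: evenperm_unique)
  have pp: "permutation p" using p permutation_permutes by blast
  show ?case
  proof (rule exI[of _ "length cs # ls"], intro conjI allI impI)
    show "sum_list (length cs # ls) = card (set cs \<union> I)" using card ls(1) by simp
  next
    fix k assume k: "\<forall>L\<in>set (length cs # ls). 2 \<le> L \<longrightarrow> L dvd k"
    have "?c ^^ k = id"
    proof (cases "length cs \<le> 1")
      case True then show ?thesis by (simp add: cycle_of_list_short)
    next
      case False then show ?thesis using k comp.hyps(2) by (intro cycle_of_list_funpow_eq_id) auto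
    qed
    then show "(?c \<circ> p) ^^ k = id" using k ls(2) by (simp add: funpow_comp_commute[OF comm])
  next
    show "evenperm (?c \<circ> p) = even (\<Sum>L\<leftarrow>length cs # ls. L - 1)"
      using evenperm_comp[OF permutation_of_cycle pp] ev ls(3) by auto
  qed
qed


lemma even_cycle_lengths_le_5:
  fixes ls :: "nat list"
  assumes "\<forall>L\<in>set ls. 2 \<le> L" "sum_list ls \<le> 5" "even (\<Sum>L\<leftarrow>ls. L - 1)"
  shows "(\<forall>L\<in>set ls. L dvd 2) \<or> (\<forall>L\<in>set ls. L dvd 3) \<or> (\<forall>L\<in>set ls. L dvd 5)"
proof (cases ls)
  case (Cons a ys)
  show ?thesis
  proof (cases ys)
    case Nil
    then have "a = 2 \<or> a = 3 \<or> a = 4 \<or> a = 5" using assms Cons by auto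
    then show ?thesis using assms Cons Nil by auto
  next
    case (Cons b zs)
    show ?thesis
    proof (cases zs)
      case Nil
      then have "(a = 2 \<and> b = 2) \<or> (a = 2 \<and> b = 3) \<or> (a = 3 \<and> b = 2)"
        using assms Cons \<open>ls = a # ys\<close> by auto
      then show ?thesis using assms Cons \<open>ls = a # ys\<close> Nil by auto
    next
      case (Cons c ws)
      then show ?thesis using assms \<open>ls = a # ys\<close> \<open>ys = b # zs\<close> by auto
    qed
  qed
qed simp

lemma alt_group_pow_eq_funpow: "p [^]\<^bsub>alt_group n\<^esub> (k::nat) = p ^^ k"
  by (induction k) (simp_all add: alt_group_one alt_group_mult comp_def funpow_swap1)

lemma alt_group_5_element_order:
  assumes "p \<in> carrier (alt_group 5)"
  shows "p [^]\<^bsub>alt_group 5\<^esub> (2::nat) = \<one>\<^bsub>alt_group 5\<^esub> \<or>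
         p [^]\<^bsub>alt_group 5\<^esub> (3::nat) = \<one>\<^bsub>alt_group 5\<^esub> \<or>
         p [^]\<^bsub>alt_group 5\<^esub> (5::nat) = \<one>\<^bsub>alt_group 5\<^esub>"
proof -
  have p: "p permutes {1..5}" "evenperm p" using assms by (auto simp: alt_group_carrier)
  have "cycle_decomp {1..5} p" using cycle_decomposition[OF p(1)] by simp
  then obtain ls where ls: "sum_list ls = 5"
     "\<forall>k. (\<forall>L\<in>set ls. 2 \<le> L \<longrightarrow> L dvd k) \<longrightarrow> p ^^ k = id"
     "evenperm p \<longleftrightarrow> even (\<Sum>L\<leftarrow>ls. L - 1)"
    using cycle_decomp_cycle_lengths by fastforce
  let ?xs = "filter (\<lambda>L. 2 \<le> L) ls"
  have "sum_list ?xs \<le> sum_list ls" by (induction ls) auto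
  moreover have "(\<Sum>L\<leftarrow>?xs. L - 1) = (\<Sum>L\<leftarrow>ls. L - 1)" by (induction ls) auto
  ultimately have "(\<forall>L\<in>set ?xs. L dvd 2) \<or> (\<forall>L\<in>set ?xs. L dvd 3) \<or> (\<forall>L\<in>set ?xs. L dvd 5)"
    using even_cycle_lengths_le_5[of ?xs] ls p(2) by auto
  then show ?thesis using ls(2) by (auto simp: alt_group_pow_eq_funpow alt_group_one)
qed

lemma order_alt_group_5: "order (alt_group 5) = 60"
  using alt_group_card_carrier[of 5] by (simp add: order_def fact_numeral)

section \<open>Derivatives and transvectants of binary forms\<close>

abbreviation Dz :: "'a::field poly poly \<Rightarrow> 'a poly poly" where
  "Dz \<equiv> map_poly pderiv"

lemma coeff_Dz: "coeff (Dz P) i = pderiv (coeff P i)"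
  by (simp add: coeff_map_poly)

lemma Dz_add: "Dz (P + Q) = Dz P + Dz Q"
  by (rule poly_eqI) (simp add: coeff_Dz pderiv_add)

lemma Dz_smult: "Dz (smult [:a:] P) = smult [:a:] (Dz P)"
  by (rule poly_eqI) (simp add: coeff_Dz pderiv_smult)

lemma Dz_mult: "Dz (P * Q) = Dz P * Q + P * Dz Q"
proof (rule poly_eqI)
  fix n
  have "coeff (Dz (P * Q)) n =
      (\<Sum>i\<le>n. pderiv (coeff P i) * coeff Q (n - i)) + (\<Sum>i\<le>n. coeff P i * pderiv (coeff Q (n - i)))"
    by (simp add: coeff_Dz coeff_mult pderiv_mult higher_pderiv_sum[of 1, simplified]
        sum.distrib[symmetric] algebra_simps)
  then show "coeff (Dz (P * Q)) n = coeff (Dz P * Q + P * Dz Q) n"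
    by (simp add: coeff_mult coeff_Dz)
qed

lemma Dz_power: "Dz (P ^ Suc n) = of_nat (Suc n) * (P ^ n * Dz P)"
proof (induction n)
  case (Suc n)
  have "Dz (P ^ Suc (Suc n)) = Dz P * P ^ Suc n + P * Dz (P ^ Suc n)"
    by (subst power_Suc, subst Dz_mult) (simp add: mult.commute)
  also have "\<dots> = of_nat (Suc (Suc n)) * (P ^ Suc n * Dz P)"
    using Suc by (simp add: algebra_simps del: of_nat_Suc) (simp add: algebra_simps)
  finally show ?case .
qed simp

definition form_linear :: "('a::field poly poly \<Rightarrow> 'a poly poly) \<Rightarrow> bool" where
  "form_linear L \<longleftrightarrow>
     (\<forall>P Q. L (P + Q) = L P + L Q) \<and> (\<forall>a P. L (smult [:a:] P) = smult [:a:] (L P))"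

lemma form_linear_add: "form_linear L \<Longrightarrow> L (P + Q) = L P + L Q"
  by (simp add: form_linear_def)

lemma form_linear_smult: "form_linear L \<Longrightarrow> L (smult [:a:] P) = smult [:a:] (L P)"
  by (simp add: form_linear_def)

lemma form_linear_zero: "form_linear L \<Longrightarrow> L 0 = 0"
  using form_linear_smult[of L 0 0] by simp

lemma form_linear_sum: "form_linear L \<Longrightarrow> L (sum f A) = (\<Sum>x\<in>A. L (f x))"
  by (induction A rule: infinite_finite_induct) (simp_all add: form_linear_zero form_linear_add)

lemma form_linear_funpow: "form_linear L \<Longrightarrow> form_linear (L ^^ k)"
  by (induction k) (simp_all add: form_linear_def)

lemma form_linear_dX: "form_linear (dX k)"
  unfolding dX_def by (intro form_linear_funpow) (simp add: form_linear_def pderiv_add pderiv_smult)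

lemma form_linear_dZ: "form_linear (dZ k)"
  unfolding dZ_def by (intro form_linear_funpow) (simp add: form_linear_def Dz_add Dz_smult)

lemma smult_sum_right: "smult c (sum f A) = (\<Sum>x\<in>A. smult c (f x))"
  by (induction A rule: infinite_finite_induct) (simp_all add: smult_add_right)

lemma of_int_mult_eq_smult: "(of_int z :: 'a::field poly poly) * P = smult [:of_int z:] P"
  by (metis mult.commute mult.right_neutral mult_smult_right of_int_poly smult_one)

lemma transvectant_add_left:
  "transvectant n m r (P1 + P2) Q = transvectant n m r P1 Q + transvectant n m r P2 Q"
  unfolding transvectant_def
  by (simp add: form_linear_add[OF form_linear_dX] form_linear_add[OF form_linear_dZ]
      distrib_left distrib_right sum.distrib smult_add_right)

lemma transvectant_add_right:
  "transvectant n m r P (Q1 + Q2) = transvectant n m r P Q1 + transvectant n m r P Q2"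
  unfolding transvectant_def
  by (simp add: form_linear_add[OF form_linear_dX] form_linear_add[OF form_linear_dZ]
      distrib_left distrib_right sum.distrib smult_add_right)

lemma transvectant_smult_left:
  "transvectant n m r (smult [:a:] P) Q = smult [:a:] (transvectant n m r P Q)"
  unfolding transvectant_def
  by (simp add: form_linear_smult[OF form_linear_dX] form_linear_smult[OF form_linear_dZ]
      smult_sum_right smult_smult mult.commute[of "[:a:]"] mult.commute[of a] mult.assoc)

lemma transvectant_smult_right:
  "transvectant n m r P (smult [:a:] Q) = smult [:a:] (transvectant n m r P Q)"
  unfolding transvectant_def
  by (simp add: form_linear_smult[OF form_linear_dX] form_linear_smult[OF form_linear_dZ]
      smult_sum_right smult_smult mult.commute[of "[:a:]"] mult.commute[of a] mult.assoc)

lemma transvectant_0_left: "transvectant n m r 0 Q = 0"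
  using transvectant_smult_left[of n m r 0 0 Q] by simp

lemma transvectant_0_right: "transvectant n m r P 0 = 0"
  using transvectant_smult_right[of n m r P 0 0] by simp

definition falling_fact :: "nat \<Rightarrow> nat \<Rightarrow> nat" where
  "falling_fact n q = (\<Prod>i<q. n - i)"

lemma falling_fact_0 [simp]: "falling_fact n 0 = 1"
  by (simp add: falling_fact_def)

lemma falling_fact_Suc: "falling_fact n (Suc q) = falling_fact n q * (n - q)"
  by (simp add: falling_fact_def)

lemma falling_fact_add: "falling_fact n (a + b) = falling_fact n a * falling_fact (n - a) b"
  by (induction b) (simp_all add: falling_fact_Suc diff_diff_add)

lemma falling_fact_mult_fact: "q \<le> n \<Longrightarrow> falling_fact n q * fact (n - q) = fact n"
proof (induction q)
  case (Suc q)
  then have e: "n - q = Suc (n - Suc q)" by simp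
  have "fact (n - q) = (n - q) * fact (n - Suc q)"
    by (subst e, subst fact_Suc) (simp add: e[symmetric])
  then show ?case using Suc by (simp add: falling_fact_Suc)
qed simp

lemma falling_fact_pos: "r \<le> n \<Longrightarrow> falling_fact n r > 0"
  by (metis falling_fact_mult_fact fact_nonzero mult_is_0 neq0_conv)

lemma smult_pCons_1 [simp]: "smult [:1:] (P :: 'a::field poly poly) = P"
  by (subst one_pCons[symmetric]) simp

lemma Dz_1 [simp]: "Dz 1 = 0"
  by (simp add: map_poly_1)

lemma pderiv_linf: "pderiv (linf a b) = [:[:a:]:]"
  by (simp add: linf_def pderiv_pCons)

lemma Dz_linf: "Dz (linf a b) = [:[:b:]:]"
  by (simp add: linf_def map_poly_pCons pderiv_pCons)

lemma dZ_linf_power: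
  "dZ q (linf a b ^ n) = smult [:of_nat (falling_fact n q) * b ^ q:] (linf a b ^ (n - q))"
proof (induction q)
  case 0 then show ?case by (simp add: dZ_def)
next
  case (Suc q)
  have "dZ (Suc q) (linf a b ^ n) = Dz (dZ q (linf a b ^ n))" by (simp add: dZ_def)
  also have "\<dots> = smult [:of_nat (falling_fact n q) * b ^ q:] (Dz (linf a b ^ (n - q)))"
    using Suc by (simp add: Dz_smult)
  also have "\<dots> = smult [:of_nat (falling_fact n (Suc q)) * b ^ Suc q:] (linf a b ^ (n - Suc q))"
  proof (cases "n - q")
    case 0
    then show ?thesis by (simp add: falling_fact_Suc)
  next
    case (Suc k)
    then have "n - Suc q = k" by simp
    then show ?thesis using Suc
      by (simp del: power_Suc add: Dz_power Dz_linf falling_fact_Suc smult_smult of_nat_poly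
          algebra_simps) (simp add: algebra_simps)
  qed
  finally show ?case .
qed

lemma dX_smult_linf_power:
  "dX p (smult [:c:] (linf a b ^ n)) =
     smult [:c * of_nat (falling_fact n p) * a ^ p:] (linf a b ^ (n - p))"
proof (induction p)
  case 0 then show ?case by (simp add: dX_def)
next
  case (Suc p)
  have "dX (Suc p) (smult [:c:] (linf a b ^ n)) = pderiv (dX p (smult [:c:] (linf a b ^ n)))"
    by (simp add: dX_def)
  also have "\<dots> = smult [:c * of_nat (falling_fact n p) * a ^ p:] (pderiv (linf a b ^ (n - p)))"
    using Suc by (simp add: pderiv_smult)
  also have "\<dots> = smult [:c * of_nat (falling_fact n (Suc p)) * a ^ Suc p:] (linf a b ^ (n - Suc p))"
  proof (cases "n - p")
    case 0
    then show ?thesis by (simp add: falling_fact_Suc)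
  next
    case (Suc k)
    then have "n - Suc p = k" by simp
    then show ?thesis using Suc
      by (simp del: power_Suc add: pderiv_power_Suc pderiv_linf falling_fact_Suc smult_smult
          algebra_simps of_nat_poly) (simp add: algebra_simps)
  qed
  finally show ?case .
qed

lemma dX_dZ_linf_power:
  assumes "p + q \<le> n"
  shows "dX p (dZ q (linf a b ^ n)) =
           smult [:of_nat (falling_fact n (q + p)) * b ^ q * a ^ p:] (linf a b ^ (n - (q + p)))"
  by (simp add: dZ_linf_power dX_smult_linf_power falling_fact_add diff_diff_add mult_ac)

lemma alternating_binomial_det:
  fixes a1 b1 a2 b2 :: "'a::field"
  shows "(\<Sum>j\<le>r. of_int ((-1) ^ j * int (r choose j)) * (b1 ^ j * a1 ^ (r - j)) * (b2 ^ (r - j) * a2 ^ j))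
     = (a1 * b2 - b1 * a2) ^ r"
proof -
  have "(a1 * b2 - b1 * a2) ^ r = (-(b1 * a2) + a1 * b2) ^ r" by (simp add: algebra_simps)
  also have "\<dots> = (\<Sum>k\<le>r. of_nat (r choose k) * (-(b1 * a2)) ^ k * (a1 * b2) ^ (r - k))"
    by (rule binomial_ring)
  also have "\<dots> = (\<Sum>j\<le>r. of_int ((-1) ^ j * int (r choose j)) * (b1 ^ j * a1 ^ (r - j)) * (b2 ^ (r - j) * a2 ^ j))"
  proof (rule sum.cong[OF refl])
    fix k
    have ac: "of_nat c * (s * (x1 * x2)) * (y1 * y2) = (s * of_nat c) * (x1 * y1) * (y2 * x2)"
      for c :: nat and s x1 x2 y1 y2 :: 'a
      by (simp only: mult_ac)
    have "(-(b1 * a2)) ^ k = (-1) ^ k * (b1 ^ k * a2 ^ k)"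
      by (subst power_minus) (simp only: power_mult_distrib)
    moreover have "(a1 * b2) ^ (r - k) = a1 ^ (r - k) * b2 ^ (r - k)"
      by (simp add: power_mult_distrib)
    moreover have "of_int ((-1) ^ k * int (r choose k)) = ((-1) ^ k * of_nat (r choose k) :: 'a)"
      by simp
    ultimately show "of_nat (r choose k) * (-(b1 * a2)) ^ k * (a1 * b2) ^ (r - k) =
      of_int ((-1) ^ k * int (r choose k)) * (b1 ^ k * a1 ^ (r - k)) * (b2 ^ (r - k) * a2 ^ k)"
      by (simp only: ac)
  qed
  finally show ?thesis by simp
qed

lemma smult_mult_smult:
  "smult [:z:] (smult [:a:] U) * smult [:b:] V = smult [:z * a * b:] (U * V)"
  by (simp add: mult_smult_left mult_smult_right smult_smult mult.assoc) (simp only: mult_ac)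

lemma const_poly_sum: "(\<Sum>j\<in>A. [:f j:]) = [:\<Sum>j\<in>A. f j:]"
  by (induction A rule: infinite_finite_induct) simp_all

lemma transvectant_factor_mult_falling_fact:
  assumes "r \<le> n" "r \<le> m"
  shows "of_nat (fact (m - r) * fact (n - r)) / of_nat (fact n * fact m) *
           (of_nat (falling_fact n r) * of_nat (falling_fact m r)) = (1 :: 'a::field_char_0)"
proof -
  have "of_nat (fact n) = (of_nat (falling_fact n r) * of_nat (fact (n - r)) :: 'a)"
       "of_nat (fact m) = (of_nat (falling_fact m r) * of_nat (fact (m - r)) :: 'a)"
    using falling_fact_mult_fact[OF assms(1)] falling_fact_mult_fact[OF assms(2)]
    by (metis of_nat_mult of_nat_fact)+
  moreover have "(of_nat (fact (n - r)) :: 'a) \<noteq> 0" "(of_nat (fact (m - r)) :: 'a) \<noteq> 0"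
    "(of_nat (falling_fact n r) :: 'a) \<noteq> 0" "(of_nat (falling_fact m r) :: 'a) \<noteq> 0"
    using falling_fact_pos[OF assms(1)] falling_fact_pos[OF assms(2)] by auto
  ultimately show ?thesis by (simp add: field_simps)
qed

lemma transvectant_linf_power:
  fixes a1 b1 a2 b2 :: "'a::field_char_0"
  assumes "r \<le> n" "r \<le> m"
  shows "transvectant n m r (linf a1 b1 ^ n) (linf a2 b2 ^ m)
       = smult [:(a1 * b2 - b1 * a2) ^ r:] (linf a1 b1 ^ (n - r) * linf a2 b2 ^ (m - r))"
proof -
  let ?W = "linf a1 b1 ^ (n - r) * linf a2 b2 ^ (m - r)"
  let ?K = "of_nat (fact (m - r) * fact (n - r)) / of_nat (fact n * fact m) :: 'a"
  let ?c = "\<lambda>j. of_int ((-1) ^ j * int (r choose j)) *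
              (of_nat (falling_fact n r) * b1 ^ j * a1 ^ (r - j)) *
              (of_nat (falling_fact m r) * b2 ^ (r - j) * a2 ^ j)"
  have summand: "of_int ((-1) ^ j * int (r choose j)) * dX (r - j) (dZ j (linf a1 b1 ^ n))
        * dX j (dZ (r - j) (linf a2 b2 ^ m)) = smult [:?c j:] ?W" if "j \<le> r" for j
  proof -
    have factors: "dX (r - j) (dZ j (linf a1 b1 ^ n)) =
        smult [:of_nat (falling_fact n r) * b1 ^ j * a1 ^ (r - j):] (linf a1 b1 ^ (n - r))"
      "dX j (dZ (r - j) (linf a2 b2 ^ m)) =
        smult [:of_nat (falling_fact m r) * b2 ^ (r - j) * a2 ^ j:] (linf a2 b2 ^ (m - r))"
      using dX_dZ_linf_power[of "r - j" j n a1 b1] dX_dZ_linf_power[of j "r - j" m a2 b2] that assms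
      by simp_all
    show ?thesis unfolding factors of_int_mult_eq_smult smult_mult_smult ..
  qed
  have sum: "(\<Sum>j\<le>r. ?c j) =
      of_nat (falling_fact n r) * of_nat (falling_fact m r) * (a1 * b2 - b1 * a2) ^ r"
    unfolding alternating_binomial_det[symmetric] sum_distrib_left
    by (rule sum.cong[OF refl]) (simp only: mult_ac)
  have K: "?K * (of_nat (falling_fact n r) * of_nat (falling_fact m r)) = 1"
    by (rule transvectant_factor_mult_falling_fact[OF assms])
  have "transvectant n m r (linf a1 b1 ^ n) (linf a2 b2 ^ m) = smult [:?K:] (\<Sum>j\<le>r. smult [:?c j:] ?W)"
    unfolding transvectant_def using summand by (intro arg_cong[of _ _ "smult [:?K:]"] sum.cong) auto
  also have "\<dots> = smult [:?K * (\<Sum>j\<le>r. ?c j):] ?W"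
    by (simp only: smult_sum[symmetric] const_poly_sum smult_smult) (simp add: mult.commute)
  also have "\<dots> = smult [:(a1 * b2 - b1 * a2) ^ r:] ?W"
    using K unfolding sum by (simp only: mult.assoc[symmetric]) simp
  finally show ?thesis .
qed

section \<open>Linear substitutions\<close>

lemma map_poly_additive:
  assumes "f 0 = 0" "\<And>x y. f (x + y) = f x + f y"
  shows "map_poly f (p + q) = map_poly f p + map_poly f q"
  by (rule poly_eqI) (simp add: coeff_map_poly assms)

lemma map_poly_multiplicative:
  fixes f :: "'a::comm_ring_1 \<Rightarrow> 'b::comm_ring_1"
  assumes "f 0 = 0" "\<And>x y. f (x + y) = f x + f y" "\<And>x y. f (x * y) = f x * f y"
  shows "map_poly f (p * q) = map_poly f p * map_poly f q"
  by (rule poly_eqI)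
    (simp add: coeff_map_poly coeff_mult assms sum_comp_morphism[of f, OF assms(1,2), symmetric] o_def)

lemma pCons_conv_X_mult: "pCons u (P :: 'a::comm_ring_1 poly) = [:u:] + [:0, 1:] * P"
  by simp

lemma map_poly_const: "f 0 = 0 \<Longrightarrow> map_poly f [:a:] = [:f a:]"
  by (cases "a = 0") (simp_all add: map_poly_pCons)

text \<open>\<open>subst_form L1 L2 P\<close> is the form \<open>P(L1, L2)\<close>: the outer variable \<open>X\<close> is replaced by \<open>L1\<close>
  and the inner variable \<open>Z\<close> by \<open>L2\<close>; \<open>subst_Z\<close> does the latter for a single coefficient.\<close>

definition subst_Z :: "'a::field poly poly \<Rightarrow> 'a poly \<Rightarrow> 'a poly poly" where
  "subst_Z L c = poly (map_poly (\<lambda>a. [:[:a:]:]) c) L"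

definition subst_form :: "'a::field poly poly \<Rightarrow> 'a poly poly \<Rightarrow> 'a poly poly \<Rightarrow> 'a poly poly" where
  "subst_form L1 L2 P = poly (map_poly (subst_Z L2) P) L1"

lemma subst_Z_0 [simp]: "subst_Z L 0 = 0"
  by (simp add: subst_Z_def)

lemma subst_Z_add: "subst_Z L (x + y) = subst_Z L x + subst_Z L y"
  by (simp add: subst_Z_def map_poly_additive)

lemma subst_Z_mult: "subst_Z L (x * y) = subst_Z L x * subst_Z L y"
  by (simp add: subst_Z_def map_poly_multiplicative)

lemma subst_Z_const: "subst_Z L [:a:] = [:[:a:]:]"
  by (simp add: subst_Z_def map_poly_const)

lemma subst_Z_1 [simp]: "subst_Z L 1 = 1"
  using subst_Z_const[of L 1] by (simp add: one_pCons)

lemma subst_Z_monom: "subst_Z L (monom a j) = smult [:a:] (L ^ j)"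
  by (simp add: subst_Z_def map_poly_monom poly_monom)

lemma subst_Z_X: "subst_Z L [:0, 1:] = L"
  by (simp add: subst_Z_def map_poly_pCons)

lemma subst_form_0 [simp]: "subst_form L1 L2 0 = 0"
  by (simp add: subst_form_def)

lemma subst_form_add: "subst_form L1 L2 (P + Q) = subst_form L1 L2 P + subst_form L1 L2 Q"
  by (simp add: subst_form_def map_poly_additive subst_Z_add)

lemma subst_form_mult: "subst_form L1 L2 (P * Q) = subst_form L1 L2 P * subst_form L1 L2 Q"
  by (simp add: subst_form_def map_poly_multiplicative subst_Z_add subst_Z_mult)

lemma subst_form_const: "subst_form L1 L2 [:u:] = subst_Z L2 u"
  by (simp add: subst_form_def map_poly_const)

lemma subst_form_X: "subst_form L1 L2 [:0, 1:] = L1"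
  by (simp add: subst_form_def map_poly_pCons subst_Z_const)

lemma subst_form_smult: "subst_form L1 L2 (smult [:a:] P) = smult [:a:] (subst_form L1 L2 P)"
proof -
  have "subst_form L1 L2 (smult [:a:] P) = subst_form L1 L2 ([:[:a:]:] * P)" by simp
  also have "\<dots> = [:[:a:]:] * subst_form L1 L2 P"
    by (simp only: subst_form_mult subst_form_const subst_Z_const)
  finally show ?thesis by simp
qed

lemma subst_form_power: "subst_form L1 L2 (P ^ n) = subst_form L1 L2 P ^ n"
proof (induction n)
  case 0
  show ?case using subst_form_const[of L1 L2 1] by (simp flip: one_pCons)
next
  case (Suc n)
  then show ?case by (simp add: subst_form_mult)
qed

lemma form_linear_subst_form: "form_linear (subst_form L1 L2)"
  by (simp add: form_linear_def subst_form_add subst_form_smult)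

lemma subst_form_monom: "subst_form L1 L2 (monom (monom a j) i) = smult [:a:] (L1 ^ i * L2 ^ j)"
  by (simp add: subst_form_def map_poly_monom poly_monom subst_Z_monom mult.commute)

lemma subst_form_linf:
  "subst_form (linf a b) (linf c e) (linf x y) = linf (x * a + y * c) (x * b + y * e)"
  by (simp add: subst_form_def linf_def subst_Z_def map_poly_pCons algebra_simps)

definition mat_subst :: "'a::field \<times> 'a \<times> 'a \<times> 'a \<Rightarrow> 'a poly poly \<Rightarrow> 'a poly poly" where
  "mat_subst M = (case M of (a, b, c, e) \<Rightarrow> subst_form (linf a b) (linf c e))"

lemma form_subst_eq_mat_subst: "form_subst d f M = mat_subst M (homog d f)"
  by (cases M) (simp add: form_subst_def mat_subst_def homog_def
      form_linear_sum[OF form_linear_subst_form] subst_form_monom)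

definition eval_form :: "'a::field poly poly \<Rightarrow> 'a \<times> 'a \<Rightarrow> 'a" where
  "eval_form P w = poly (poly P [:fst w:]) (snd w)"

lemma eval_form_0 [simp]: "eval_form 0 w = 0"
  by (simp add: eval_form_def)

lemma eval_form_add: "eval_form (P + Q) w = eval_form P w + eval_form Q w"
  by (simp add: eval_form_def)

lemma eval_form_mult: "eval_form (P * Q) w = eval_form P w * eval_form Q w"
  by (simp add: eval_form_def)

lemma eval_form_smult: "eval_form (smult [:a:] P) w = a * eval_form P w"
  by (simp add: eval_form_def)

lemma eval_form_sum: "eval_form (sum f A) w = (\<Sum>k\<in>A. eval_form (f k) w)"
  by (induction A rule: infinite_finite_induct) (simp_all add: eval_form_add)

lemma eval_form_const: "eval_form [:u:] w = poly u (snd w)"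
  by (simp add: eval_form_def)

lemma eval_form_pCons: "eval_form (pCons u P) w = poly u (snd w) + fst w * eval_form P w"
  by (simp add: eval_form_def)

lemma eval_form_linf: "eval_form (linf a b) w = a * fst w + b * snd w"
  by (simp add: eval_form_def linf_def algebra_simps)

lemma eval_subst_Z: "eval_form (subst_Z L u) w = poly u (eval_form L w)"
proof (induction u)
  case (pCons a u)
  have "subst_Z L (pCons a u) = subst_Z L [:a:] + subst_Z L [:0, 1:] * subst_Z L u"
    by (subst pCons_conv_X_mult) (simp only: subst_Z_add subst_Z_mult)
  then show ?case using pCons by (simp add: eval_form_add eval_form_mult subst_Z_const subst_Z_X eval_form_const)
qed simp

lemma eval_subst_form:
  "eval_form (subst_form L1 L2 P) w = eval_form P (eval_form L1 w, eval_form L2 w)"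
proof (induction P)
  case (pCons u P)
  have "subst_form L1 L2 (pCons u P) = subst_form L1 L2 [:u:] + subst_form L1 L2 [:0, 1:] * subst_form L1 L2 P"
    by (subst pCons_conv_X_mult) (simp only: subst_form_add subst_form_mult)
  then show ?case
    using pCons by (simp add: eval_form_add eval_form_mult eval_subst_Z eval_form_pCons subst_form_const subst_form_X)
qed simp

section \<open>Homogeneous forms and covariance of transvectants\<close>

definition homogeneous :: "nat \<Rightarrow> 'a::field poly poly \<Rightarrow> bool" where
  "homogeneous n P \<longleftrightarrow> (\<forall>i j. coeff (coeff P i) j \<noteq> 0 \<longrightarrow> i + j = n)"

definition monomial_form :: "nat \<Rightarrow> nat \<Rightarrow> 'a::field poly poly" where
  "monomial_form n k = monom (monom 1 k) (n - k)"

lemma homogeneous_0 [simp]: "homogeneous n 0"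
  by (simp add: homogeneous_def)

lemma homogeneous_add: "homogeneous n P \<Longrightarrow> homogeneous n Q \<Longrightarrow> homogeneous n (P + Q)"
  unfolding homogeneous_def by (metis add.right_neutral add_0 coeff_add)

lemma homogeneous_smult: "homogeneous n P \<Longrightarrow> homogeneous n (smult [:a:] P)"
  by (auto simp: homogeneous_def)

lemma homogeneous_sum: "(\<And>x. x \<in> A \<Longrightarrow> homogeneous n (f x)) \<Longrightarrow> homogeneous n (sum f A)"
  by (induction A rule: infinite_finite_induct) (auto intro: homogeneous_add)

lemma homogeneous_monom: "homogeneous (i + j) (monom (monom a j) i)"
  by (simp add: homogeneous_def)

lemma homogeneous_mult:
  assumes P: "homogeneous n P" and Q: "homogeneous m Q"
  shows "homogeneous (n + m) (P * Q)"
  unfolding homogeneous_def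
proof (intro allI impI)
  fix i j
  assume nz: "coeff (coeff (P * Q) i) j \<noteq> 0"
  show "i + j = n + m"
  proof (rule ccontr)
    assume ne: "i + j \<noteq> n + m"
    have "coeff (coeff (P * Q) i) j =
      (\<Sum>a\<le>i. \<Sum>b\<le>j. coeff (coeff P a) b * coeff (coeff Q (i - a)) (j - b))"
      by (simp add: coeff_mult coeff_sum)
    also have "\<dots> = 0"
    proof (intro sum.neutral ballI)
      fix a b assume "a \<in> {..i}" "b \<in> {..j}"
      then have ab: "a \<le> i" "b \<le> j" by auto
      show "coeff (coeff P a) b * coeff (coeff Q (i - a)) (j - b) = 0"
      proof (cases "coeff (coeff P a) b = 0")
        case False
        then have "a + b = n" using P by (auto simp: homogeneous_def)
        then have "(i - a) + (j - b) \<noteq> m" using ne ab by arith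
        then have "coeff (coeff Q (i - a)) (j - b) = 0" using Q by (auto simp: homogeneous_def)
        then show ?thesis by simp
      qed simp
    qed
    finally show False using nz by simp
  qed
qed

lemma homogeneous_pderiv: assumes "homogeneous n P" shows "homogeneous (n - 1) (pderiv P)"
  unfolding homogeneous_def
proof (intro allI impI)
  fix i j assume "coeff (coeff (pderiv P) i) j \<noteq> 0"
  then have "coeff (coeff P (Suc i)) j \<noteq> 0" by (auto simp: coeff_pderiv of_nat_poly)
  then have "Suc i + j = n" using assms unfolding homogeneous_def by blast
  then show "i + j = n - 1" by simp
qed

lemma homogeneous_Dz: assumes "homogeneous n P" shows "homogeneous (n - 1) (Dz P)"
  unfolding homogeneous_def
proof (intro allI impI)
  fix i j assume "coeff (coeff (Dz P) i) j \<noteq> 0"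
  then have "coeff (coeff P i) (Suc j) \<noteq> 0" by (auto simp: coeff_Dz coeff_pderiv)
  then have "i + Suc j = n" using assms unfolding homogeneous_def by blast
  then show "i + j = n - 1" by simp
qed

lemma homogeneous_dX: assumes "homogeneous n P" shows "homogeneous (n - k) (dX k P)"
proof (induction k)
  case (Suc k)
  have "homogeneous (n - k - 1) (pderiv (dX k P))" by (rule homogeneous_pderiv[OF Suc])
  then show ?case by (simp add: dX_def)
qed (use assms in \<open>simp add: dX_def\<close>)

lemma homogeneous_dZ: assumes "homogeneous n P" shows "homogeneous (n - k) (dZ k P)"
proof (induction k)
  case (Suc k)
  have "homogeneous (n - k - 1) (Dz (dZ k P))" by (rule homogeneous_Dz[OF Suc])
  then show ?case by (simp add: dZ_def)
qed (use assms in \<open>simp add: dZ_def\<close>)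

lemma homogeneous_transvectant:
  assumes "homogeneous n P" "homogeneous m Q" "r \<le> n" "r \<le> m"
  shows "homogeneous (n + m - 2 * r) (transvectant n m r P Q)"
  unfolding transvectant_def
proof (intro homogeneous_smult homogeneous_sum)
  fix j assume "j \<in> {..r}"
  then have j: "j \<le> r" by simp
  have e1: "n - j - (r - j) = n - r" and e2: "m - (r - j) - j = m - r" using j assms(3,4) by arith+
  have "homogeneous (n - r) (dX (r - j) (dZ j P))"
    using homogeneous_dX[OF homogeneous_dZ[OF assms(1), of j], of "r - j"] unfolding e1 .
  moreover have "homogeneous (m - r) (dX j (dZ (r - j) Q))"
    using homogeneous_dX[OF homogeneous_dZ[OF assms(2), of "r - j"], of j] unfolding e2 .
  ultimately have "homogeneous ((n - r) + (m - r)) (dX (r - j) (dZ j P) * dX j (dZ (r - j) Q))"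
    by (rule homogeneous_mult)
  moreover have "(n - r) + (m - r) = n + m - 2 * r" using assms(3,4) by simp
  ultimately show "homogeneous (n + m - 2 * r)
      (of_int ((- 1) ^ j * int (r choose j)) * dX (r - j) (dZ j P) * dX j (dZ (r - j) Q))"
    by (simp only: of_int_mult_eq_smult mult_smult_left homogeneous_smult)
qed

lemma homogeneous_homog: "homogeneous d (homog d f)"
  unfolding homog_def
proof (intro homogeneous_sum)
  fix i assume "i \<in> {..d}"
  then show "homogeneous d (monom (monom (coeff f i) (d - i)) i)"
    using homogeneous_monom[of i "d - i" "coeff f i"] by simp
qed

lemma homogeneous_expand:
  assumes "homogeneous n P"
  shows "P = (\<Sum>k\<le>n. smult [:coeff (coeff P (n - k)) k:] (monomial_form n k))"
proof (rule poly_eqI)+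
  fix i j
  have "coeff (coeff (\<Sum>k\<le>n. smult [:coeff (coeff P (n - k)) k:] (monomial_form n k)) i) j
      = (\<Sum>k\<le>n. if n - k = i \<and> k = j then coeff (coeff P (n - k)) k else 0)"
    by (auto simp: coeff_sum monomial_form_def intro!: sum.cong)
  also have "\<dots> = coeff (coeff P i) j"
  proof (cases "i + j = n")
    case True
    then have "(\<Sum>k\<le>n. if n - k = i \<and> k = j then coeff (coeff P (n - k)) k else 0)
        = (\<Sum>k\<in>{j}. if n - k = i \<and> k = j then coeff (coeff P (n - k)) k else 0)"
      by (intro sum.mono_neutral_right) auto
    then show ?thesis using True by simp
  next
    case False
    then have "coeff (coeff P i) j = 0" using assms by (auto simp: homogeneous_def)
    moreover have "(\<Sum>k\<le>n. if n - k = i \<and> k = j then coeff (coeff P (n - k)) k else 0) = 0"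
      using False by (intro sum.neutral) auto
    ultimately show ?thesis by simp
  qed
  finally show "coeff (coeff P i) j =
      coeff (coeff (\<Sum>k\<le>n. smult [:coeff (coeff P (n - k)) k:] (monomial_form n k)) i) j" ..
qed

lemma linf_1_power_expand:
  "linf 1 c ^ n = (\<Sum>k\<le>n. smult [:of_nat (n choose k) * c ^ k:] (monomial_form n k))"
proof -
  have "linf 1 c = monom (monom c 1) 0 + monom 1 1"
    by (simp add: linf_def monom_altdef)
  then have "linf 1 c ^ n =
      (\<Sum>k\<le>n. of_nat (n choose k) * (monom (monom c 1) 0) ^ k * (monom 1 1) ^ (n - k))"
    by (simp add: binomial_ring)
  also have "\<dots> = (\<Sum>k\<le>n. smult [:of_nat (n choose k) * c ^ k:] (monomial_form n k))"
    by (simp add: monom_power mult_monom monomial_form_def of_nat_poly smult_monom)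
  finally show ?thesis .
qed

lemma sum_smult_powers_eq_0D:
  fixes v :: "nat \<Rightarrow> 'a::field_char_0 poly poly"
  assumes "\<And>c. (\<Sum>k\<le>n. smult [:c ^ k:] (v k)) = 0" "k \<le> n"
  shows "v k = 0"
proof (rule poly_eqI)+
  fix i j
  let ?p = "\<Sum>k\<le>n. monom (coeff (coeff (v k) i) j) k"
  have "poly ?p c = 0" for c
  proof -
    have "poly ?p c = coeff (coeff (\<Sum>k\<le>n. smult [:c ^ k:] (v k)) i) j"
      by (simp add: poly_sum poly_monom coeff_sum mult.commute)
    then show ?thesis using assms(1) by simp
  qed
  then have "?p = 0" using poly_all_0_iff_0 by blast
  then have "coeff ?p k = 0" by simp
  then show "coeff (coeff (v k) i) j = coeff (coeff 0 i) j"
    using assms(2) by (simp add: coeff_sum)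
qed

text \<open>In characteristic 0 the powers \<open>(X + c Z)\<^sup>n\<close> span the forms of degree \<open>n\<close>.\<close>

lemma form_linear_eq_0_on_homogeneous:
  fixes L :: "'a::field_char_0 poly poly \<Rightarrow> 'a poly poly"
  assumes L: "form_linear L" and vanish: "\<And>c. L (linf 1 c ^ n) = 0" and P: "homogeneous n P"
  shows "L P = 0"
proof -
  have monomial: "L (monomial_form n k) = 0" if k: "k \<le> n" for k
  proof -
    let ?v = "\<lambda>k. smult [:of_nat (n choose k):] (L (monomial_form n k))"
    have "(\<Sum>k\<le>n. smult [:c ^ k:] (?v k)) = L (linf 1 c ^ n)" for c
      by (simp add: linf_1_power_expand form_linear_sum[OF L] form_linear_smult[OF L]
          smult_smult mult.commute)
    then have "?v k = 0" using sum_smult_powers_eq_0D[of ?v n k] vanish k by simp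
    then show ?thesis using k by simp
  qed
  have "L P = L (\<Sum>k\<le>n. smult [:coeff (coeff P (n - k)) k:] (monomial_form n k))"
    using homogeneous_expand[OF P] by simp
  also have "\<dots> = 0"
    by (simp add: form_linear_sum[OF L] form_linear_smult[OF L] monomial)
  finally show ?thesis .
qed

text \<open>By bilinearity it suffices to check covariance on pairs of powers of linear forms, where it
  is the multiplicativity of the determinant.\<close>

lemma transvectant_mat_subst:
  fixes M :: "'a::field_char_0 \<times> 'a \<times> 'a \<times> 'a"
  assumes P: "homogeneous n P" and Q: "homogeneous m Q" and r: "r \<le> n" "r \<le> m"
  shows "transvectant n m r (mat_subst M P) (mat_subst M Q)
       = smult [:mat_det M ^ r:] (mat_subst M (transvectant n m r P Q))"
proof -
  obtain a b c e where M: "M = (a, b, c, e)" by (cases M) auto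
  define S where "S = mat_subst M"
  define Psi where "Psi P Q = transvectant n m r (S P) (S Q) -
      smult [:mat_det M ^ r:] (S (transvectant n m r P Q))" for P Q
  have S: "S = subst_form (linf a b) (linf c e)" by (simp add: S_def M mat_subst_def)
  have linS: "form_linear S" unfolding S by (rule form_linear_subst_form)
  have lin1: "form_linear (\<lambda>P. Psi P Q)" for Q
    unfolding form_linear_def Psi_def
    by (simp add: form_linear_add[OF linS] form_linear_smult[OF linS] transvectant_add_left
        transvectant_smult_left smult_add_right smult_diff_right smult_smult mult.commute)
  have lin2: "form_linear (\<lambda>Q. Psi P Q)" for P
    unfolding form_linear_def Psi_def
    by (simp add: form_linear_add[OF linS] form_linear_smult[OF linS] transvectant_add_right
        transvectant_smult_right smult_add_right smult_diff_right smult_smult mult.commute)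
  have S_linf: "S (linf 1 x ^ k) = linf (a + x * c) (b + x * e) ^ k" for x k
    unfolding S subst_form_power subst_form_linf by simp
  have "Psi (linf 1 x1 ^ n) (linf 1 x2 ^ m) = 0" for x1 x2
  proof -
    have "S (transvectant n m r (linf 1 x1 ^ n) (linf 1 x2 ^ m)) =
        smult [:(x2 - x1) ^ r:] (linf (a + x1 * c) (b + x1 * e) ^ (n - r) *
                                  linf (a + x2 * c) (b + x2 * e) ^ (m - r))"
      unfolding transvectant_linf_power[OF r] S
      by (simp add: subst_form_smult subst_form_mult subst_form_power subst_form_linf)
    moreover have "(a + x1 * c) * (b + x2 * e) - (b + x1 * e) * (a + x2 * c) =
        mat_det M * (x2 - x1)"
      by (simp add: M mat_det_def algebra_simps)
    ultimately show ?thesis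
      unfolding Psi_def S_linf transvectant_linf_power[OF r]
      by (simp add: smult_smult power_mult_distrib mult.commute)
  qed
  then have "Psi P (linf 1 x2 ^ m) = 0" for x2
    by (intro form_linear_eq_0_on_homogeneous[OF lin1 _ P])
  then have "Psi P Q = 0"
    by (intro form_linear_eq_0_on_homogeneous[OF lin2 _ Q])
  then show ?thesis unfolding Psi_def S_def by simp
qed

section \<open>Zeros of binary forms on the projective line\<close>

definition vec_scale :: "'a::field \<Rightarrow> 'a \<times> 'a \<Rightarrow> 'a \<times> 'a" where
  "vec_scale t w = (t * fst w, t * snd w)"

definition mat_vec :: "'a::field \<times> 'a \<times> 'a \<times> 'a \<Rightarrow> 'a \<times> 'a \<Rightarrow> 'a \<times> 'a" where
  "mat_vec M w = (case M of (a, b, c, e) \<Rightarrow> (a * fst w + b * snd w, c * fst w + e * snd w))"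

definition mat_scale :: "'a::field \<Rightarrow> 'a \<times> 'a \<times> 'a \<times> 'a \<Rightarrow> 'a \<times> 'a \<times> 'a \<times> 'a" where
  "mat_scale s M = (case M of (a, b, c, e) \<Rightarrow> (s * a, s * b, s * c, s * e))"

definition proj_point :: "'a::field \<times> 'a \<Rightarrow> ('a \<times> 'a) set" where
  "proj_point w = {vec_scale t w | t. t \<noteq> 0}"

definition proj_line :: "('a::field \<times> 'a) set set" where
  "proj_line = {proj_point w | w. w \<noteq> (0, 0)}"

definition proj_act :: "'a::field \<times> 'a \<times> 'a \<times> 'a \<Rightarrow> ('a \<times> 'a) set \<Rightarrow> ('a \<times> 'a) set" where
  "proj_act M L = mat_vec M ` L"

definition proj_zeros :: "'a::field poly poly \<Rightarrow> ('a \<times> 'a) set set" where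
  "proj_zeros P = {proj_point w | w. w \<noteq> (0, 0) \<and> eval_form P w = 0}"

lemma eval_mat_subst: "eval_form (mat_subst M P) w = eval_form P (mat_vec M w)"
  by (cases M) (simp add: mat_subst_def eval_subst_form eval_form_linf mat_vec_def)

lemma eval_monomial_form: "eval_form (monomial_form n k) w = fst w ^ (n - k) * snd w ^ k"
  by (simp add: eval_form_def monomial_form_def poly_monom)

lemma eval_homogeneous_expand:
  assumes "homogeneous n P"
  shows "eval_form P w = (\<Sum>k\<le>n. coeff (coeff P (n - k)) k * (fst w ^ (n - k) * snd w ^ k))"
  by (subst homogeneous_expand[OF assms]) (simp add: eval_form_sum eval_form_smult eval_monomial_form)

lemma eval_homogeneous_vec_scale:
  assumes "homogeneous n P"
  shows "eval_form P (vec_scale t w) = t ^ n * eval_form P w"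
proof -
  obtain x z where w: "w = (x, z)" by (cases w) auto
  have "eval_form P (vec_scale t w) =
      (\<Sum>k\<le>n. coeff (coeff P (n - k)) k * ((t * x) ^ (n - k) * (t * z) ^ k))"
    by (simp add: eval_homogeneous_expand[OF assms] vec_scale_def w)
  also have "\<dots> = (\<Sum>k\<le>n. t ^ n * (coeff (coeff P (n - k)) k * (x ^ (n - k) * z ^ k)))"
  proof (rule sum.cong[OF refl])
    fix k assume "k \<in> {..n}"
    then have "t ^ (n - k) * t ^ k = t ^ n" by (simp add: power_add[symmetric])
    then show "coeff (coeff P (n - k)) k * ((t * x) ^ (n - k) * (t * z) ^ k) =
        t ^ n * (coeff (coeff P (n - k)) k * (x ^ (n - k) * z ^ k))"
      by (simp add: power_mult_distrib algebra_simps)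
  qed
  also have "\<dots> = t ^ n * eval_form P w"
    by (simp add: eval_homogeneous_expand[OF assms] sum_distrib_left w)
  finally show ?thesis .
qed

lemma eval_form_inject:
  fixes P Q :: "'a::field_char_0 poly poly"
  assumes "\<And>w. eval_form P w = eval_form Q w"
  shows "P = Q"
proof (rule ccontr)
  assume ne: "P \<noteq> Q"
  have "poly (P - Q) [:x:] = 0" for x
  proof -
    have "\<forall>z. poly (poly (P - Q) [:x:]) z = 0"
      using assms[of "(x, _)"] by (simp add: eval_form_def)
    then show ?thesis using poly_all_0_iff_0 by blast
  qed
  then have sub: "range (\<lambda>x. [:x:]) \<subseteq> {y. poly (P - Q) y = 0}" by auto
  have "finite {y. poly (P - Q) y = 0}" using ne by (intro poly_roots_finite) simp
  then have "finite (range (\<lambda>x::'a. [:x:]))" using sub finite_subset by blast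
  moreover have "inj (\<lambda>x::'a. [:x:])" by (auto intro: injI)
  ultimately have "finite (UNIV :: 'a set)" using finite_imageD by blast
  then show False using infinite_UNIV_char_0 by blast
qed

definition dehomog :: "nat \<Rightarrow> 'a::field poly poly \<Rightarrow> 'a poly" where
  "dehomog n P = (\<Sum>k\<le>n. monom (coeff (coeff P (n - k)) k) (n - k))"

lemma poly_dehomog: "homogeneous n P \<Longrightarrow> poly (dehomog n P) x = eval_form P (x, 1)"
  by (simp add: dehomog_def poly_sum poly_monom eval_homogeneous_expand mult.commute)

lemma coeff_dehomog: "i \<le> n \<Longrightarrow> coeff (dehomog n P) i = coeff (coeff P i) (n - i)"
proof -
  assume i: "i \<le> n"
  have "coeff (dehomog n P) i = (\<Sum>k\<le>n. if n - k = i then coeff (coeff P (n - k)) k else 0)"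
    by (simp add: dehomog_def coeff_sum)
  also have "\<dots> = (\<Sum>k\<in>{n - i}. if n - k = i then coeff (coeff P (n - k)) k else 0)"
    using i by (intro sum.mono_neutral_right) auto
  also have "\<dots> = coeff (coeff P i) (n - i)" using i by simp
  finally show ?thesis .
qed

lemma degree_dehomog: "degree (dehomog n P) \<le> n"
  by (rule degree_le) (auto simp: dehomog_def coeff_sum intro!: sum.neutral)

lemma dehomog_nonzero:
  assumes "homogeneous n P" "P \<noteq> 0"
  shows "dehomog n P \<noteq> 0"
proof -
  obtain i where "coeff P i \<noteq> 0" using assms(2) by (metis leading_coeff_0_iff)
  then obtain j where ij: "coeff (coeff P i) j \<noteq> 0" by (metis leading_coeff_0_iff)
  then have "i + j = n" using assms(1) by (simp add: homogeneous_def)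
  then have "coeff (dehomog n P) i \<noteq> 0" using ij coeff_dehomog[of i n P]
    by (metis add_diff_cancel_left' le_add1)
  then show ?thesis by auto
qed

lemma vec_scale_vec_scale: "vec_scale s (vec_scale t w) = vec_scale (s * t) w"
  by (simp add: vec_scale_def)

lemma vec_scale_1 [simp]: "vec_scale 1 w = w"
  by (simp add: vec_scale_def)

lemma vec_scale_inject: "v \<noteq> (0, 0) \<Longrightarrow> vec_scale t v = vec_scale t' v \<Longrightarrow> t = t'"
  by (cases v) (auto simp: vec_scale_def)

lemma mat_vec_vec_scale: "mat_vec M (vec_scale t w) = vec_scale t (mat_vec M w)"
  by (cases M) (simp add: mat_vec_def vec_scale_def algebra_simps)

lemma mat_vec_mat_scale: "mat_vec (mat_scale s M) w = vec_scale s (mat_vec M w)"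
  by (cases M) (simp add: mat_vec_def mat_scale_def vec_scale_def algebra_simps)

lemma mat_vec_mat_mult: "mat_vec (mat_mult M N) w = mat_vec M (mat_vec N w)"
  by (cases M, cases N) (simp add: mat_vec_def mat_mult_def algebra_simps)

lemma mat_vec_one [simp]: "mat_vec (1, 0, 0, 1) w = w"
  by (simp add: mat_vec_def)

lemma mat_vec_nonzero:
  assumes "mat_det M \<noteq> 0" "w \<noteq> (0, 0)"
  shows "mat_vec M w \<noteq> (0, 0)"
proof
  obtain a b c e where M: "M = (a, b, c, e)" by (cases M) auto
  obtain x z where w: "w = (x, z)" by (cases w) auto
  assume "mat_vec M w = (0, 0)"
  then have h: "a * x + b * z = 0" "c * x + e * z = 0" by (auto simp: M w mat_vec_def)
  have D: "a * e - b * c \<noteq> 0" using assms(1) by (simp add: M mat_det_def)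
  have "(a * e - b * c) * x = e * (a * x + b * z) - b * (c * x + e * z)"
       "(a * e - b * c) * z = a * (c * x + e * z) - c * (a * x + b * z)"
    by (simp_all add: algebra_simps)
  then have "x = 0" "z = 0" using h D by simp_all
  then show False using assms(2) w by simp
qed

lemma mem_proj_point: "w \<in> proj_point w"
  unfolding proj_point_def by (rule CollectI, rule exI[of _ 1]) simp

lemma in_proj_point_iff: "u \<in> proj_point w \<longleftrightarrow> (\<exists>t. t \<noteq> 0 \<and> u = vec_scale t w)"
  by (auto simp: proj_point_def)

lemma proj_point_vec_scale:
  assumes t: "t \<noteq> 0"
  shows "proj_point (vec_scale t w) = proj_point w"
proof (rule Set.set_eqI)
  fix u
  show "u \<in> proj_point (vec_scale t w) \<longleftrightarrow> u \<in> proj_point w"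
  proof
    assume "u \<in> proj_point (vec_scale t w)"
    then obtain s where "s \<noteq> 0" "u = vec_scale s (vec_scale t w)" by (auto simp: in_proj_point_iff)
    then show "u \<in> proj_point w"
      using t by (auto simp: in_proj_point_iff vec_scale_vec_scale intro!: exI[of _ "s * t"])
  next
    assume "u \<in> proj_point w"
    then obtain s where s: "s \<noteq> 0" "u = vec_scale s w" by (auto simp: in_proj_point_iff)
    then have "u = vec_scale (s / t) (vec_scale t w)" using t by (simp add: vec_scale_vec_scale)
    then show "u \<in> proj_point (vec_scale t w)"
      using s t by (auto simp: in_proj_point_iff intro!: exI[of _ "s / t"])
  qed
qed

lemma proj_act_proj_point: "proj_act M (proj_point w) = proj_point (mat_vec M w)"
proof (rule Set.set_eqI)
  fix x
  show "x \<in> proj_act M (proj_point w) \<longleftrightarrow> x \<in> proj_point (mat_vec M w)"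
  proof
    assume "x \<in> proj_act M (proj_point w)"
    then obtain u where "u \<in> proj_point w" "x = mat_vec M u" by (auto simp: proj_act_def)
    then show "x \<in> proj_point (mat_vec M w)" by (auto simp: in_proj_point_iff mat_vec_vec_scale)
  next
    assume "x \<in> proj_point (mat_vec M w)"
    then obtain t where t: "t \<noteq> 0" "x = vec_scale t (mat_vec M w)" by (auto simp: in_proj_point_iff)
    then have "x = mat_vec M (vec_scale t w)" by (simp add: mat_vec_vec_scale)
    moreover have "vec_scale t w \<in> proj_point w" using t by (auto simp: in_proj_point_iff)
    ultimately show "x \<in> proj_act M (proj_point w)" by (auto simp: proj_act_def)
  qed
qed

lemma proj_act_in_proj_line: "mat_det M \<noteq> 0 \<Longrightarrow> L \<in> proj_line \<Longrightarrow> proj_act M L \<in> proj_line"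
  unfolding proj_line_def using proj_act_proj_point mat_vec_nonzero by blast

lemma proj_act_mat_mult: "proj_act (mat_mult M N) L = proj_act M (proj_act N L)"
  by (simp add: proj_act_def mat_vec_mat_mult image_image)

lemma proj_act_mat_scale: "s \<noteq> 0 \<Longrightarrow> L \<in> proj_line \<Longrightarrow> proj_act (mat_scale s M) L = proj_act M L"
  unfolding proj_line_def by (auto simp: proj_act_proj_point mat_vec_mat_scale proj_point_vec_scale)

lemma proj_act_one: "proj_act (1, 0, 0, 1) L = L"
  by (simp add: proj_act_def)

lemma proj_zeros_memI: "w \<noteq> (0, 0) \<Longrightarrow> eval_form P w = 0 \<Longrightarrow> proj_point w \<in> proj_zeros P"
  unfolding proj_zeros_def by blast

lemma proj_zeros_subset_proj_line: "proj_zeros P \<subseteq> proj_line"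
  by (auto simp: proj_zeros_def proj_line_def)

lemma proj_act_proj_zeros:
  assumes "mat_det M \<noteq> 0" "mat_subst M P = smult [:\<mu>:] P" "L \<in> proj_zeros P"
  shows "proj_act M L \<in> proj_zeros P"
proof -
  obtain w where w: "L = proj_point w" "w \<noteq> (0, 0)" "eval_form P w = 0"
    using assms(3) by (auto simp: proj_zeros_def)
  have "eval_form P (mat_vec M w) = eval_form (mat_subst M P) w" by (simp add: eval_mat_subst)
  also have "\<dots> = 0" using w assms(2) by (simp add: eval_form_smult)
  finally have "proj_point (mat_vec M w) \<in> proj_zeros P"
    using mat_vec_nonzero[OF assms(1) w(2)] by (simp add: proj_zeros_memI)
  then show ?thesis using w by (simp add: proj_act_proj_point)
qed

text \<open>The zeros lie among \<open>(1 : 0)\<close> and the points \<open>(x : 1)\<close> with \<open>x\<close> a root of the dehomogenisation,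
  which has degree at most \<open>n\<close>.\<close>

lemma finite_card_proj_zeros:
  fixes P :: "'a::field_char_0 poly poly"
  assumes h: "homogeneous n P" and nz: "P \<noteq> 0"
  shows "finite (proj_zeros P) \<and> card (proj_zeros P) \<le> n + 1"
proof -
  let ?R = "{x. poly (dehomog n P) x = 0}"
  let ?B = "(\<lambda>x. proj_point (x, 1)) ` ?R \<union> {proj_point (1, 0)}"
  have pnz: "dehomog n P \<noteq> 0" by (rule dehomog_nonzero[OF h nz])
  have sub: "proj_zeros P \<subseteq> ?B"
  proof
    fix L assume "L \<in> proj_zeros P"
    then obtain x z where L: "L = proj_point (x, z)" "(x, z) \<noteq> (0, 0)" "eval_form P (x, z) = 0"
      by (auto simp: proj_zeros_def)
    show "L \<in> ?B"
    proof (cases "z = 0")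
      case True
      then have "vec_scale (1 / x) (x, z) = (1, 0)" using L(2) by (simp add: vec_scale_def)
      then show ?thesis using L True proj_point_vec_scale[of "1 / x" "(x, z)"] by simp
    next
      case False
      then have e: "vec_scale (1 / z) (x, z) = (x / z, 1)" by (simp add: vec_scale_def)
      then have "L = proj_point (x / z, 1)"
        using L False proj_point_vec_scale[of "1 / z" "(x, z)"] by simp
      moreover have "eval_form P (x / z, 1) = 0"
        using eval_homogeneous_vec_scale[OF h, of "1 / z" "(x, z)"] e L(3) by simp
      ultimately show ?thesis using poly_dehomog[OF h] by auto
    qed
  qed
  have fR: "finite ?R" using poly_roots_finite[OF pnz] .
  have "card ?R \<le> n" using card_poly_roots_bound[OF pnz] degree_dehomog[of n P] by linarith
  moreover have "card ?B \<le> card ((\<lambda>x. proj_point (x, 1)) ` ?R) + 1"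
    using card_Un_le[of "(\<lambda>x. proj_point (x, 1)) ` ?R" "{proj_point (1, 0)}"] by simp
  ultimately have "card ?B \<le> n + 1"
    using card_image_le[OF fR, of "\<lambda>x. proj_point (x, 1)"] by linarith
  moreover have "finite ?B" using fR by simp
  ultimately show ?thesis using sub card_mono[of ?B "proj_zeros P"] finite_subset[OF sub] by linarith
qed

lemma proj_zeros_nonempty:
  fixes P :: "'a::{alg_closed_field, field_char_0} poly poly"
  assumes h: "homogeneous n P" and nz: "P \<noteq> 0" and n: "1 \<le> n"
  shows "proj_zeros P \<noteq> {}"
proof (cases "eval_form P (1, 0) = 0")
  case True
  then have "proj_point (1, 0) \<in> proj_zeros P" by (simp add: proj_zeros_memI)
  then show ?thesis by auto
next
  case False
  have "eval_form P (1, 0) = (\<Sum>k\<le>n. coeff (coeff P (n - k)) k * (1 ^ (n - k) * 0 ^ k))"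
    by (simp add: eval_homogeneous_expand[OF h])
  also have "\<dots> = (\<Sum>k\<in>{0}. coeff (coeff P (n - k)) k * (1 ^ (n - k) * 0 ^ k))"
    by (intro sum.mono_neutral_right) auto
  finally have "coeff (dehomog n P) n \<noteq> 0" using False coeff_dehomog[of n n P] by simp
  then have "degree (dehomog n P) = n" using degree_dehomog[of n P] le_degree by (metis antisym)
  then obtain x where "poly (dehomog n P) x = 0"
    using alg_closed_imp_poly_has_root n by (metis gr0I not_one_le_zero)
  then have "proj_point (x, 1) \<in> proj_zeros P"
    using poly_dehomog[OF h] by (simp add: proj_zeros_memI)
  then show ?thesis by auto
qed

section \<open>Matrices, projective classes and the stabiliser of a form\<close>

lemma mat_det_mat_scale: "mat_det (mat_scale s M) = s ^ 2 * mat_det M"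
  by (cases M) (simp add: mat_det_def mat_scale_def power2_eq_square algebra_simps)

lemma mat_det_mat_mult: "mat_det (mat_mult M N) = mat_det M * mat_det N"
  by (cases M, cases N) (simp add: mat_det_def mat_mult_def algebra_simps)

lemma mat_scale_mat_scale: "mat_scale s (mat_scale t M) = mat_scale (s * t) M"
  by (cases M) (simp add: mat_scale_def)

lemma mat_scale_1 [simp]: "mat_scale 1 M = M"
  by (cases M) (simp add: mat_scale_def)

lemma mat_mult_mat_scale: "mat_mult (mat_scale s M) (mat_scale t N) = mat_scale (s * t) (mat_mult M N)"
  by (cases M, cases N) (simp add: mat_scale_def mat_mult_def algebra_simps)

lemma in_proj_class_iff: "N \<in> proj_class M \<longleftrightarrow> (\<exists>t. t \<noteq> 0 \<and> N = mat_scale t M)"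
  by (cases M) (auto simp: proj_class_def mat_scale_def)

lemma mem_proj_class: "M \<in> proj_class M"
  using in_proj_class_iff[of M M] by (metis mat_scale_1 one_neq_zero)

lemma proj_class_mat_scale:
  assumes t: "t \<noteq> 0"
  shows "proj_class (mat_scale t M) = proj_class M"
proof (rule Set.set_eqI)
  fix N
  show "N \<in> proj_class (mat_scale t M) \<longleftrightarrow> N \<in> proj_class M"
  proof
    assume "N \<in> proj_class (mat_scale t M)"
    then obtain s where "s \<noteq> 0" "N = mat_scale s (mat_scale t M)" by (auto simp: in_proj_class_iff)
    then show "N \<in> proj_class M"
      using t by (auto simp: in_proj_class_iff mat_scale_mat_scale intro!: exI[of _ "s * t"])
  next
    assume "N \<in> proj_class M"
    then obtain s where s: "s \<noteq> 0" "N = mat_scale s M" by (auto simp: in_proj_class_iff)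
    then have "N = mat_scale (s / t) (mat_scale t M)" using t by (simp add: mat_scale_mat_scale)
    then show "N \<in> proj_class (mat_scale t M)"
      using s t by (auto simp: in_proj_class_iff intro!: exI[of _ "s / t"])
  qed
qed

lemma bij_betw_proj_act:
  assumes "mat_det M \<noteq> 0"
  shows "bij_betw (proj_act M) proj_line proj_line"
proof -
  obtain a b c e where M: "M = (a, b, c, e)" by (cases M) auto
  let ?D = "a * e - b * c"
  let ?N = "mat_scale (1 / ?D) (e, - b, - c, a)"
  have D: "?D \<noteq> 0" using assms by (simp add: M mat_det_def)
  have adj: "mat_mult (e, - b, - c, a) M = mat_scale ?D (1, 0, 0, 1)"
    "mat_mult M (e, - b, - c, a) = mat_scale ?D (1, 0, 0, 1)"
    by (simp_all add: M mat_mult_def mat_scale_def algebra_simps)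
  have NM: "mat_mult ?N M = (1, 0, 0, 1)"
    using mat_mult_mat_scale[of "1 / ?D" "(e, - b, - c, a)" 1 M] D
    by (simp only: mat_scale_1 adj mat_scale_mat_scale) simp
  have MN: "mat_mult M ?N = (1, 0, 0, 1)"
    using mat_mult_mat_scale[of 1 M "1 / ?D" "(e, - b, - c, a)"] D
    by (simp only: mat_scale_1 adj mat_scale_mat_scale) simp
  have "mat_det M * mat_det ?N = 1"
    using MN mat_det_mat_mult[of M ?N] by (simp add: mat_det_def)
  then have N: "mat_det ?N \<noteq> 0" by auto
  show ?thesis
  proof (rule bij_betw_byWitness[where f' = "proj_act ?N"])
    show "\<forall>L\<in>proj_line. proj_act ?N (proj_act M L) = L"
      by (simp add: proj_act_one NM flip: proj_act_mat_mult)
    show "\<forall>L\<in>proj_line. proj_act M (proj_act ?N L) = L"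
      by (simp add: proj_act_one MN flip: proj_act_mat_mult)
    show "proj_act M ` proj_line \<subseteq> proj_line" using proj_act_in_proj_line[OF assms] by blast
    show "proj_act ?N ` proj_line \<subseteq> proj_line" using proj_act_in_proj_line[OF N] by blast
  qed
qed

text \<open>If \<open>l\<close> is an eigenvalue of \<open>M\<close> with \<open>l\<^sup>2 = det M\<close>, it is a double eigenvalue: \<open>M = l I + N\<close>
  with \<open>N\<^sup>2 = 0\<close>, hence \<open>M\<^sup>k = l\<^sup>k I + k l\<^sup>k\<^sup>-\<^sup>1 N\<close>, and \<open>M\<^sup>k\<close> is scalar only if \<open>N = 0\<close>.\<close>

lemma eigenvalue_square_eq_det:
  fixes a b c e l :: "'a::field"
  assumes v: "(v1, v2) \<noteq> (0, 0)" and e1: "a * v1 + b * v2 = l * v1" and e2: "c * v1 + e * v2 = l * v2"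
    and det: "l ^ 2 = a * e - b * c" and l: "l \<noteq> 0"
  shows "b * c = (a - l) * (e - l)" "a + e = 2 * l"
proof -
  have "((a - l) * (e - l) - b * c) * v1 = (e - l) * (a * v1 + b * v2 - l * v1) - b * (c * v1 + e * v2 - l * v2)"
       "((a - l) * (e - l) - b * c) * v2 = (a - l) * (c * v1 + e * v2 - l * v2) - c * (a * v1 + b * v2 - l * v1)"
    by (simp_all add: algebra_simps)
  then have "((a - l) * (e - l) - b * c) * v1 = 0" "((a - l) * (e - l) - b * c) * v2 = 0"
    using e1 e2 by simp_all
  then show bc: "b * c = (a - l) * (e - l)" using v by auto
  have "l * (a + e) = l * (2 * l)"
    using det unfolding bc by (simp add: algebra_simps power2_eq_square)
  then show "a + e = 2 * l" using l by simp
qed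

lemma mat_vec_funpow_double_eigenvalue:
  fixes a b c e l :: "'a::field"
  assumes bc: "b * c = (a - l) * (e - l)" and tr: "a + e = 2 * l"
  shows "(mat_vec (a, b, c, e) ^^ k) (x, z) =
     (l ^ k * x + of_nat k * l ^ (k - 1) * ((a - l) * x + b * z),
      l ^ k * z + of_nat k * l ^ (k - 1) * (c * x + (e - l) * z))"
proof (induction k)
  case (Suc k)
  let ?n1 = "(a - l) * x + b * z" and ?n2 = "c * x + (e - l) * z"
  have "(a - l) * ?n1 + b * ?n2 = x * ((a - l) * (a - l) + b * c) + b * z * (a + e - 2 * l)"
    by (simp add: algebra_simps)
  also have "\<dots> = (x * (a - l) + b * z) * (a + e - 2 * l)"
    by (subst bc) (simp add: algebra_simps)
  finally have nil1: "(a - l) * ?n1 + b * ?n2 = 0" using tr by simp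
  have "c * ?n1 + (e - l) * ?n2 = z * ((e - l) * (e - l) + b * c) + c * x * (a + e - 2 * l)"
    by (simp add: algebra_simps)
  also have "\<dots> = (z * (e - l) + c * x) * (a + e - 2 * l)"
    by (subst bc) (simp add: algebra_simps)
  finally have nil2: "c * ?n1 + (e - l) * ?n2 = 0" using tr by simp
  have k: "of_nat (Suc k) * l ^ k = l ^ k + of_nat k * l ^ (k - 1) * l"
    by (cases k) (simp_all add: algebra_simps)
  have "a * (l ^ k * x + of_nat k * l ^ (k - 1) * ?n1) + b * (l ^ k * z + of_nat k * l ^ (k - 1) * ?n2)
        = l ^ Suc k * x + of_nat (Suc k) * l ^ k * ?n1 + of_nat k * l ^ (k - 1) * ((a - l) * ?n1 + b * ?n2)"
       "c * (l ^ k * x + of_nat k * l ^ (k - 1) * ?n1) + e * (l ^ k * z + of_nat k * l ^ (k - 1) * ?n2)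
        = l ^ Suc k * z + of_nat (Suc k) * l ^ k * ?n2 + of_nat k * l ^ (k - 1) * (c * ?n1 + (e - l) * ?n2)"
    unfolding k by (simp_all add: algebra_simps)
  then show ?case using Suc nil1 nil2 by (simp add: mat_vec_def)
qed simp

lemma double_eigenvalue_finite_order_scalar:
  fixes M :: "'a::field_char_0 \<times> 'a \<times> 'a \<times> 'a"
  assumes v: "v \<noteq> (0, 0)" and eig: "mat_vec M v = vec_scale l v" and det: "l ^ 2 = mat_det M"
    and l: "l \<noteq> 0" and k: "1 \<le> k" and pow: "\<And>w. \<exists>s. (mat_vec M ^^ k) w = vec_scale s w"
  shows "M = mat_scale l (1, 0, 0, 1)"
proof -
  obtain a b c e where M: "M = (a, b, c, e)" by (cases M) auto
  obtain v1 v2 where vv: "v = (v1, v2)" by (cases v) auto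
  have "a * v1 + b * v2 = l * v1" "c * v1 + e * v2 = l * v2" "l ^ 2 = a * e - b * c"
    using eig det by (simp_all add: M vv mat_vec_def vec_scale_def mat_det_def)
  note ev = eigenvalue_square_eq_det[OF v[unfolded vv] this l]
  have p: "of_nat k * l ^ (k - 1) \<noteq> (0::'a)" using k l by simp
  obtain s1 s2 where "(mat_vec M ^^ k) (1, 0) = vec_scale s1 (1, 0)"
    "(mat_vec M ^^ k) (0, 1) = vec_scale s2 (0, 1)" using pow by meson
  then have "of_nat k * l ^ (k - 1) * c = 0" "of_nat k * l ^ (k - 1) * b = 0"
    using mat_vec_funpow_double_eigenvalue[OF ev, of k] by (simp_all add: M vec_scale_def)
  then have b: "b = 0" and c: "c = 0" using p by auto
  then have "a = l" "e = l" using ev by auto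
  then show ?thesis using b c by (simp add: M mat_scale_def)
qed

lemma roots_of_unity_finite_card:
  assumes "1 \<le> k"
  shows "finite {x::'a::field. x ^ k = 1} \<and> card {x::'a::field. x ^ k = 1} \<le> k"
proof -
  let ?p = "monom (1::'a) k - 1"
  have "coeff ?p k = 1" using assms by simp
  then have nz: "?p \<noteq> 0" by (metis coeff_0 zero_neq_one)
  have "degree ?p \<le> k" by (simp add: degree_diff_le degree_monom_le)
  moreover have "{x::'a. x ^ k = 1} = {x. poly ?p x = 0}" by (simp add: poly_monom)
  ultimately show ?thesis using poly_roots_finite[OF nz] card_poly_roots_bound[OF nz] by simp
qed

lemma form_stab_iff:
  "M \<in> form_stab d f \<longleftrightarrow>
     mat_det M \<noteq> 0 \<and> (\<exists>c. c \<noteq> 0 \<and> mat_subst M (homog d f) = smult [:c:] (homog d f))"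
  by (simp add: form_stab_def form_subst_eq_mat_subst)

lemma form_stab_mat_mult:
  fixes f :: "'a::field_char_0 poly"
  assumes "M \<in> form_stab d f" "N \<in> form_stab d f"
  shows "mat_mult M N \<in> form_stab d f"
proof -
  let ?F = "homog d f"
  obtain l1 where l1: "l1 \<noteq> 0" "mat_subst M ?F = smult [:l1:] ?F" "mat_det M \<noteq> 0"
    using assms(1) form_stab_iff by blast
  obtain l2 where l2: "l2 \<noteq> 0" "mat_subst N ?F = smult [:l2:] ?F" "mat_det N \<noteq> 0"
    using assms(2) form_stab_iff by blast
  have "mat_subst (mat_mult M N) ?F = smult [:l1 * l2:] ?F"
  proof (rule eval_form_inject)
    fix w
    have "eval_form (mat_subst (mat_mult M N) ?F) w = eval_form (mat_subst M ?F) (mat_vec N w)"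
      by (simp add: eval_mat_subst mat_vec_mat_mult)
    also have "\<dots> = l1 * eval_form (mat_subst N ?F) w"
      by (simp add: l1 eval_form_smult eval_mat_subst)
    finally show "eval_form (mat_subst (mat_mult M N) ?F) w = eval_form (smult [:l1 * l2:] ?F) w"
      by (simp add: l2 eval_form_smult)
  qed
  then show ?thesis
    using l1 l2 by (auto simp: form_stab_iff mat_det_mat_mult intro!: exI[of _ "l1 * l2"])
qed

lemma form_stab_mat_scale:
  fixes f :: "'a::field_char_0 poly"
  assumes "M \<in> form_stab d f" "t \<noteq> 0"
  shows "mat_scale t M \<in> form_stab d f"
proof -
  let ?F = "homog d f"
  obtain l1 where l1: "l1 \<noteq> 0" "mat_subst M ?F = smult [:l1:] ?F" "mat_det M \<noteq> 0"
    using assms(1) form_stab_iff by blast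
  have "mat_subst (mat_scale t M) ?F = smult [:t ^ d * l1:] ?F"
  proof (rule eval_form_inject)
    fix w
    have "eval_form (mat_subst (mat_scale t M) ?F) w = t ^ d * eval_form (mat_subst M ?F) w"
      by (simp add: eval_mat_subst mat_vec_mat_scale eval_homogeneous_vec_scale[OF homogeneous_homog])
    then show "eval_form (mat_subst (mat_scale t M) ?F) w = eval_form (smult [:t ^ d * l1:] ?F) w"
      by (simp add: l1 eval_form_smult)
  qed
  then show ?thesis
    using l1 assms(2) by (auto simp: form_stab_iff mat_det_mat_scale intro!: exI[of _ "t ^ d * l1"])
qed

lemma form_stab_one:
  fixes f :: "'a::field_char_0 poly"
  shows "(1, 0, 0, 1) \<in> form_stab d f"
proof -
  have "mat_subst (1, 0, 0, 1) (homog d f) = smult [:1:] (homog d f)"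
    by (rule eval_form_inject) (simp add: eval_mat_subst eval_form_smult)
  then show ?thesis by (auto simp: form_stab_iff mat_det_def intro!: exI[of _ 1])
qed

lemma homogeneous_transvectant_homog:
  assumes "2 * k \<le> d"
  shows "homogeneous (4 * k) (transvectant d d (d - 2 * k) (homog d f) (homog d f))"
proof -
  have "homogeneous (d + d - 2 * (d - 2 * k)) (transvectant d d (d - 2 * k) (homog d f) (homog d f))"
    by (rule homogeneous_transvectant[OF homogeneous_homog homogeneous_homog]) simp_all
  moreover have "d + d - 2 * (d - 2 * k) = 4 * k" using assms by simp
  ultimately show ?thesis by simp
qed

lemma form_stab_transvectant_semi_invariant:
  fixes f :: "'a::field_char_0 poly"
  assumes "M \<in> form_stab d f" "r \<le> d"
  shows "\<exists>\<mu>. mat_subst M (transvectant d d r (homog d f) (homog d f))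
                = smult [:\<mu>:] (transvectant d d r (homog d f) (homog d f))"
proof -
  let ?F = "homog d f"
  let ?J = "transvectant d d r ?F ?F"
  obtain l where l: "mat_subst M ?F = smult [:l:] ?F" and D: "mat_det M \<noteq> 0"
    using assms(1) form_stab_iff by blast
  have "transvectant d d r (mat_subst M ?F) (mat_subst M ?F) = smult [:mat_det M ^ r:] (mat_subst M ?J)"
    by (rule transvectant_mat_subst[OF homogeneous_homog homogeneous_homog assms(2) assms(2)])
  then have eq: "smult [:mat_det M ^ r:] (mat_subst M ?J) = smult [:l * l:] ?J"
    by (simp add: l transvectant_smult_left transvectant_smult_right smult_smult)
  have "mat_subst M ?J = smult [:1 / mat_det M ^ r:] (smult [:mat_det M ^ r:] (mat_subst M ?J))"
    using D by (simp add: smult_smult)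
  also have "\<dots> = smult [:l * l / mat_det M ^ r:] ?J"
    unfolding eq by (simp add: smult_smult)
  finally show ?thesis by blast
qed

section \<open>Projective representations and their point stabilisers\<close>

lemma product_eq_60_imp: "(a::nat) * b = 60 \<Longrightarrow> 9 < a \<or> 9 < b"
proof (rule ccontr)
  assume h: "a * b = 60" "\<not> (9 < a \<or> 9 < b)"
  then have "a = 0 \<or> a = 1 \<or> a = 2 \<or> a = 3 \<or> a = 4 \<or> a = 5 \<or> a = 6 \<or> a = 7 \<or> a = 8 \<or> a = 9"
    by arith
  then show False using h by (elim disjE; simp; presburger)
qed

text \<open>A faithful homomorphism from \<open>G\<close> to \<open>PGL\<^sub>2\<close>, given by matrices that are determined only up to
  a scalar.\<close>

locale proj_rep = group G for G (structure) +
  fixes R :: "'g \<Rightarrow> 'a::field_char_0 \<times> 'a \<times> 'a \<times> 'a"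
  assumes det_R_nonzero: "s \<in> carrier G \<Longrightarrow> mat_det (R s) \<noteq> 0"
    and R_mult: "s \<in> carrier G \<Longrightarrow> t \<in> carrier G \<Longrightarrow>
                 \<exists>c. c \<noteq> 0 \<and> R (s \<otimes> t) = mat_scale c (mat_mult (R s) (R t))"
    and R_scalar_iff: "s \<in> carrier G \<Longrightarrow> (\<exists>c. c \<noteq> 0 \<and> R s = mat_scale c (1, 0, 0, 1)) \<longleftrightarrow> s = \<one>"
begin

lemma R_one: "\<exists>c. c \<noteq> 0 \<and> R \<one> = mat_scale c (1, 0, 0, 1)"
  using R_scalar_iff by blast

lemma R_pow:
  assumes s: "s \<in> carrier G"
  shows "\<exists>c. c \<noteq> 0 \<and> (\<forall>w. mat_vec (R (s [^] (k::nat))) w = vec_scale c ((mat_vec (R s) ^^ k) w))"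
proof (induction k)
  case 0
  then show ?case using R_one by (auto simp: mat_vec_mat_scale)
next
  case (Suc k)
  obtain c where c: "c \<noteq> 0" "\<And>w. mat_vec (R (s [^] k)) w = vec_scale c ((mat_vec (R s) ^^ k) w)"
    using Suc by blast
  obtain c' where c': "c' \<noteq> 0" "R (s [^] k \<otimes> s) = mat_scale c' (mat_mult (R (s [^] k)) (R s))"
    using R_mult[OF nat_pow_closed[OF s] s] by blast
  have "mat_vec (R (s [^] Suc k)) w = vec_scale (c' * c) ((mat_vec (R s) ^^ Suc k) w)" for w
    using c' c by (simp add: mat_vec_mat_scale mat_vec_mat_mult vec_scale_vec_scale funpow_swap1)
  then show ?case using c c' by (metis mult_eq_0_iff)
qed

definition act where
  "act s = (\<lambda>L\<in>proj_line. proj_act (R s) L)"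

lemma act_apply: "L \<in> proj_line \<Longrightarrow> act s L = proj_act (R s) L"
  by (simp add: act_def)

lemma group_action_act: "group_action G proj_line act"
proof -
  have Bij: "act s \<in> Bij proj_line" if "s \<in> carrier G" for s
    using bij_betw_proj_act[OF det_R_nonzero[OF that]]
    by (simp add: Bij_def act_def bij_betw_def inj_on_def image_def)
  have "act (s \<otimes> t) = act s \<otimes>\<^bsub>BijGroup proj_line\<^esub> act t"
    if st: "s \<in> carrier G" "t \<in> carrier G" for s t
  proof -
    obtain c where c: "c \<noteq> 0" "R (s \<otimes> t) = mat_scale c (mat_mult (R s) (R t))"
      using R_mult[OF st] by blast
    have "act (s \<otimes> t) = compose proj_line (act s) (act t)"
    proof
      fix L
      show "act (s \<otimes> t) L = compose proj_line (act s) (act t) L"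
        using c proj_act_in_proj_line[OF det_R_nonzero[OF st(2)]]
        by (cases "L \<in> proj_line") (simp_all add: act_def compose_def proj_act_mat_scale proj_act_mat_mult)
    qed
    then show ?thesis using Bij st by (simp add: BijGroup_def)
  qed
  then have "act \<in> hom G (BijGroup proj_line)"
    using Bij by (auto simp: hom_def BijGroup_def)
  then show ?thesis
    unfolding group_action_def group_hom_def group_hom_axioms_def
    using is_group group_BijGroup by blast
qed

lemma subgroup_stabilizer: "v \<noteq> (0, 0) \<Longrightarrow> subgroup (stabilizer G act (proj_point v)) G"
  using group_action.stabilizer_subgroup[OF group_action_act, of "proj_point v"]
  unfolding proj_line_def by blast

text \<open>An element fixing \<open>proj_point v\<close> has \<open>v\<close> as an eigenvector. The eigenvalue depends on the
  scalar chosen in \<open>R\<close>, but \<open>\<lambda>\<^sup>2 / det\<close> does not, which makes \<open>stab_char v\<close> a character of the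
  stabiliser.\<close>

definition eigval where
  "eigval v s = (SOME t. t \<noteq> 0 \<and> mat_vec (R s) v = vec_scale t v)"

definition stab_char where
  "stab_char v s = eigval v s ^ 2 / mat_det (R s)"

lemma eigval_eigenvector:
  assumes v: "v \<noteq> (0, 0)" and s: "s \<in> stabilizer G act (proj_point v)"
  shows "eigval v s \<noteq> 0 \<and> mat_vec (R s) v = vec_scale (eigval v s) v"
proof -
  have sc: "s \<in> carrier G" and fixed: "act s (proj_point v) = proj_point v"
    using s by (auto simp: stabilizer_def)
  have "proj_point v \<in> proj_line" unfolding proj_line_def using v by blast
  then have "proj_point (mat_vec (R s) v) = proj_point v"
    using fixed by (simp add: act_apply proj_act_proj_point)
  then have "mat_vec (R s) v \<in> proj_point v" using mem_proj_point by metis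
  then have "\<exists>t. t \<noteq> 0 \<and> mat_vec (R s) v = vec_scale t v" by (simp add: in_proj_point_iff)
  then show ?thesis unfolding eigval_def by (rule someI_ex)
qed

lemma eigval_unique:
  assumes "v \<noteq> (0, 0)" "s \<in> stabilizer G act (proj_point v)" "mat_vec (R s) v = vec_scale t v"
  shows "eigval v s = t"
  using eigval_eigenvector[OF assms(1,2)] assms(3) vec_scale_inject[OF assms(1)] by metis

lemma stab_char_mult:
  assumes v: "v \<noteq> (0, 0)"
    and s: "s \<in> stabilizer G act (proj_point v)" and t: "t \<in> stabilizer G act (proj_point v)"
  shows "stab_char v (s \<otimes> t) = stab_char v s * stab_char v t"
proof -
  have sc: "s \<in> carrier G" "t \<in> carrier G" using s t by (auto simp: stabilizer_def)
  have st: "s \<otimes> t \<in> stabilizer G act (proj_point v)"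
    using subgroup.m_closed[OF subgroup_stabilizer[OF v] s t] .
  obtain c where c: "c \<noteq> 0" "R (s \<otimes> t) = mat_scale c (mat_mult (R s) (R t))"
    using R_mult[OF sc] by blast
  have es: "eigval v s \<noteq> 0" "mat_vec (R s) v = vec_scale (eigval v s) v" using eigval_eigenvector[OF v s] by auto
  have et: "eigval v t \<noteq> 0" "mat_vec (R t) v = vec_scale (eigval v t) v" using eigval_eigenvector[OF v t] by auto
  have "mat_vec (R (s \<otimes> t)) v = vec_scale (c * eigval v t * eigval v s) v"
    using c es et by (simp add: mat_vec_mat_scale mat_vec_mat_mult mat_vec_vec_scale vec_scale_vec_scale mult.assoc)
  then have l: "eigval v (s \<otimes> t) = c * eigval v t * eigval v s"
    using eigval_unique[OF v st] by blast
  have "mat_det (R (s \<otimes> t)) = c ^ 2 * (mat_det (R s) * mat_det (R t))"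
    using c by (simp add: mat_det_mat_scale mat_det_mat_mult)
  then show ?thesis
    unfolding stab_char_def l using c det_R_nonzero sc by (simp add: field_simps power2_eq_square)
qed

lemma stab_char_nonzero:
  assumes "v \<noteq> (0, 0)" "s \<in> stabilizer G act (proj_point v)"
  shows "stab_char v s \<noteq> 0"
  using eigval_eigenvector[OF assms] det_R_nonzero[of s] assms(2) by (auto simp: stab_char_def stabilizer_def)

lemma stab_char_one:
  assumes v: "v \<noteq> (0, 0)"
  shows "stab_char v \<one> = 1"
proof -
  obtain c where c: "c \<noteq> 0" "R \<one> = mat_scale c (1, 0, 0, 1)" using R_one by blast
  have "mat_vec (R \<one>) v = vec_scale c v" using c by (simp add: mat_vec_mat_scale)
  then have "eigval v \<one> = c"
    using eigval_unique[OF v subgroup.one_closed[OF subgroup_stabilizer[OF v]]] by blast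
  then show ?thesis using c by (simp add: stab_char_def mat_scale_def mat_det_def power2_eq_square)
qed

lemma stab_char_pow:
  assumes v: "v \<noteq> (0, 0)" and s: "s \<in> stabilizer G act (proj_point v)"
  shows "stab_char v (s [^] (k::nat)) = stab_char v s ^ k"
proof (induction k)
  case (Suc k)
  have "s [^] k \<in> stabilizer G act (proj_point v)"
    by (induction k) (simp_all add: subgroup.one_closed[OF subgroup_stabilizer[OF v]]
        subgroup.m_closed[OF subgroup_stabilizer[OF v] _ s])
  then show ?case using stab_char_mult[OF v _ s] Suc by simp
qed (simp add: stab_char_one[OF v])

text \<open>Trivial character means a double eigenvalue; an element of finite order is then scalar,
  i.e. trivial in \<open>G\<close>.\<close>

lemma stab_char_eq_1_imp:
  assumes v: "v \<noteq> (0, 0)" and s: "s \<in> stabilizer G act (proj_point v)"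
    and k: "1 \<le> k" "s [^] (k::nat) = \<one>" and c1: "stab_char v s = 1"
  shows "s = \<one>"
proof -
  have sc: "s \<in> carrier G" using s by (auto simp: stabilizer_def)
  have e: "eigval v s \<noteq> 0" "mat_vec (R s) v = vec_scale (eigval v s) v" using eigval_eigenvector[OF v s] by auto
  have det: "eigval v s ^ 2 = mat_det (R s)" using c1 det_R_nonzero[OF sc] by (simp add: stab_char_def)
  obtain c where c: "c \<noteq> 0" "\<And>w. mat_vec (R (s [^] k)) w = vec_scale c ((mat_vec (R s) ^^ k) w)"
    using R_pow[OF sc] by blast
  obtain c0 where c0: "c0 \<noteq> 0" "R \<one> = mat_scale c0 (1, 0, 0, 1)" using R_one by blast
  have "(mat_vec (R s) ^^ k) w = vec_scale (c0 / c) w" for w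
  proof -
    have "vec_scale c ((mat_vec (R s) ^^ k) w) = vec_scale c0 w"
      using c(2)[of w] k(2) c0 by (simp add: mat_vec_mat_scale)
    then have "vec_scale (1 / c) (vec_scale c ((mat_vec (R s) ^^ k) w)) = vec_scale (1 / c) (vec_scale c0 w)"
      by simp
    then show ?thesis using c(1) by (simp add: vec_scale_vec_scale)
  qed
  then have "R s = mat_scale (eigval v s) (1, 0, 0, 1)"
    by (intro double_eigenvalue_finite_order_scalar[OF v e(2) det e(1) k(1)]) blast
  then show ?thesis using R_scalar_iff[OF sc] e(1) by blast
qed

lemma inj_on_stab_char:
  assumes v: "v \<noteq> (0, 0)" and torsion: "\<And>s. s \<in> carrier G \<Longrightarrow> \<exists>k::nat. 1 \<le> k \<and> s [^] k = \<one>"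
  shows "inj_on (stab_char v) (stabilizer G act (proj_point v))"
proof (rule inj_onI)
  fix s t assume s: "s \<in> stabilizer G act (proj_point v)" and t: "t \<in> stabilizer G act (proj_point v)"
    and eq: "stab_char v s = stab_char v t"
  interpret H: subgroup "stabilizer G act (proj_point v)" G by (rule subgroup_stabilizer[OF v])
  have sc: "s \<in> carrier G" "t \<in> carrier G" using s t by auto
  let ?r = "s \<otimes> inv t"
  have r: "?r \<in> stabilizer G act (proj_point v)" using s t by simp
  have rt: "?r \<otimes> t = s" using sc by (simp add: m_assoc)
  have "stab_char v ?r * stab_char v t = stab_char v t"
    using stab_char_mult[OF v r t] rt eq by simp
  then have "stab_char v ?r = 1" using stab_char_nonzero[OF v t] by simp
  moreover obtain k :: nat where "1 \<le> k" "?r [^] k = \<one>" using torsion[of ?r] r by auto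
  ultimately have "?r = \<one>" using stab_char_eq_1_imp[OF v r] by blast
  then show "s = t" using rt sc by simp
qed

lemma card_stabilizer_le_9:
  assumes v: "v \<noteq> (0, 0)"
    and orders: "\<And>s. s \<in> carrier G \<Longrightarrow> s [^] (2::nat) = \<one> \<or> s [^] (3::nat) = \<one> \<or> s [^] (5::nat) = \<one>"
  shows "card (stabilizer G act (proj_point v)) \<le> 9"
proof -
  let ?S = "stabilizer G act (proj_point v)"
  let ?U = "\<lambda>k. {x::'a. x ^ k = 1}"
  have U: "finite (?U k)" "card (?U k) \<le> k" if "1 \<le> k" for k
    using roots_of_unity_finite_card[OF that] by auto
  have "{1} \<subseteq> ?U 2 \<inter> ?U 3" by simp
  then have "1 \<le> card (?U 2 \<inter> ?U 3)"
    using card_mono[of "?U 2 \<inter> ?U 3" "{1}"] U(1)[of 2] by simp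
  then have "card (?U 2 \<union> ?U 3) \<le> 4"
    using card_Un_Int[of "?U 2" "?U 3"] U[of 2] U[of 3] by simp
  then have "card (?U 2 \<union> ?U 3 \<union> ?U 5) \<le> 9"
    using card_Un_le[of "?U 2 \<union> ?U 3" "?U 5"] U[of 5] by simp
  moreover have "stab_char v ` ?S \<subseteq> ?U 2 \<union> ?U 3 \<union> ?U 5"
  proof
    fix x assume "x \<in> stab_char v ` ?S"
    then obtain s where s: "s \<in> ?S" and x: "x = stab_char v s" by blast
    then have "s \<in> carrier G" by (auto simp: stabilizer_def)
    then consider "s [^] (2::nat) = \<one>" | "s [^] (3::nat) = \<one>" | "s [^] (5::nat) = \<one>"
      using orders by blast
    then show "x \<in> ?U 2 \<union> ?U 3 \<union> ?U 5"
      unfolding x by cases (simp_all add: stab_char_one[OF v] flip: stab_char_pow[OF v s])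
  qed
  moreover have "inj_on (stab_char v) ?S"
  proof (rule inj_on_stab_char[OF v])
    fix s assume "s \<in> carrier G"
    then have "s [^] (2::nat) = \<one> \<or> s [^] (3::nat) = \<one> \<or> s [^] (5::nat) = \<one>" by (rule orders)
    then show "\<exists>k::nat. 1 \<le> k \<and> s [^] k = \<one>" using one_le_numeral by blast
  qed
  ultimately show ?thesis
    using card_image[of "stab_char v" ?S] card_mono[of "?U 2 \<union> ?U 3 \<union> ?U 5" "stab_char v ` ?S"] U
    by simp
qed

lemma card_orbit_gt_9:
  assumes order: "order G = 60"
    and orders: "\<And>s. s \<in> carrier G \<Longrightarrow> s [^] (2::nat) = \<one> \<or> s [^] (3::nat) = \<one> \<or> s [^] (5::nat) = \<one>"
    and L: "L \<in> proj_line"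
  shows "9 < card (orbit G act L)"
proof (rule ccontr)
  assume "\<not> 9 < card (orbit G act L)"
  moreover obtain v where v: "v \<noteq> (0, 0)" "L = proj_point v" using L by (auto simp: proj_line_def)
  moreover have "card (orbit G act L) * card (stabilizer G act L) = 60"
    using group_action.orbit_stabilizer_theorem[OF group_action_act L] order by simp
  ultimately show False
    using card_stabilizer_le_9[OF v(1) orders] product_eq_60_imp by fastforce
qed

end


text \<open>A nonzero semi-invariant form has a finite invariant zero set, which would have to contain a
  whole orbit.\<close>

lemma semi_invariant_form_eq_0:
  fixes R :: "'g \<Rightarrow> 'a::{alg_closed_field, field_char_0} \<times> 'a \<times> 'a \<times> 'a"
  assumes rep: "proj_rep G R" and order: "order G = 60"
    and orders: "\<And>s. s \<in> carrier G \<Longrightarrow> s [^]\<^bsub>G\<^esub> (2::nat) = \<one>\<^bsub>G\<^esub> \<or>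
                       s [^]\<^bsub>G\<^esub> (3::nat) = \<one>\<^bsub>G\<^esub> \<or> s [^]\<^bsub>G\<^esub> (5::nat) = \<one>\<^bsub>G\<^esub>"
    and J: "homogeneous n J" and n: "1 \<le> n" "n \<le> 8"
    and semi_inv: "\<And>s. s \<in> carrier G \<Longrightarrow> \<exists>\<mu>. mat_subst (R s) J = smult [:\<mu>:] J"
  shows "J = 0"
proof (rule ccontr)
  interpret proj_rep G R by (rule rep)
  assume nz: "J \<noteq> 0"
  obtain L where L: "L \<in> proj_zeros J" using proj_zeros_nonempty[OF J nz n(1)] by blast
  then have L_line: "L \<in> proj_line" using proj_zeros_subset_proj_line by blast
  have "orbit G act L \<subseteq> proj_zeros J"
  proof
    fix L' assume "L' \<in> orbit G act L"
    then obtain s where s: "s \<in> carrier G" "L' = act s L" by (auto simp: orbit_def)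
    obtain \<mu> where "mat_subst (R s) J = smult [:\<mu>:] J" using semi_inv[OF s(1)] by blast
    then show "L' \<in> proj_zeros J"
      using proj_act_proj_zeros[OF det_R_nonzero[OF s(1)] _ L] s act_apply[OF L_line] by simp
  qed
  then have "card (orbit G act L) \<le> n + 1"
    using finite_card_proj_zeros[OF J nz] card_mono le_trans by blast
  then show False using card_orbit_gt_9[OF order orders L_line] n(2) by simp
qed

section \<open>The reduced automorphism group\<close>

lemma iso_inv_into_mult:
  assumes h: "h \<in> iso G H"
    and closed: "\<And>a b. a \<in> carrier G \<Longrightarrow> b \<in> carrier G \<Longrightarrow> a \<otimes>\<^bsub>G\<^esub> b \<in> carrier G"
    and x: "x \<in> carrier H" and y: "y \<in> carrier H"
  shows "inv_into (carrier G) h (x \<otimes>\<^bsub>H\<^esub> y) =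
           inv_into (carrier G) h x \<otimes>\<^bsub>G\<^esub> inv_into (carrier G) h y"
proof (rule inv_into_f_eq)
  have bij: "bij_betw h (carrier G) (carrier H)" and hom: "h \<in> hom G H"
    using h by (auto simp: iso_def)
  then show "inj_on h (carrier G)" by (simp add: bij_betw_def)
  have inv: "inv_into (carrier G) h z \<in> carrier G" "h (inv_into (carrier G) h z) = z"
    if "z \<in> carrier H" for z
    using bij that by (auto simp: bij_betw_def inv_into_into f_inv_into_f)
  then show "inv_into (carrier G) h x \<otimes>\<^bsub>G\<^esub> inv_into (carrier G) h y \<in> carrier G"
    using closed x y by blast
  show "h (inv_into (carrier G) h x \<otimes>\<^bsub>G\<^esub> inv_into (carrier G) h y) = x \<otimes>\<^bsub>H\<^esub> y"
    using hom inv x y by (simp add: hom_def)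
qed

lemma iso_inv_into_one:
  assumes h: "h \<in> iso G H" and H: "group H" and e: "e \<in> carrier G" "e \<otimes>\<^bsub>G\<^esub> e = e"
  shows "inv_into (carrier G) h \<one>\<^bsub>H\<^esub> = e"
proof -
  have hom: "h \<in> hom G H" and bij: "bij_betw h (carrier G) (carrier H)"
    using h by (auto simp: iso_def)
  then have he: "h e \<in> carrier H" and "h e = h e \<otimes>\<^bsub>H\<^esub> h e"
    using e by (auto simp: hom_def) (metis e(2))
  then have "h e = \<one>\<^bsub>H\<^esub>" using group.l_cancel_one'[OF H he he] by simp
  then show ?thesis using bij e(1) by (metis bij_betw_def inv_into_f_f)
qed

definition class_rep :: "('a \<times> 'a \<times> 'a \<times> 'a) set \<Rightarrow> 'a \<times> 'a \<times> 'a \<times> 'a" where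
  "class_rep A = (SOME M. M \<in> A)"

lemma red_aut_group_mult:
  "A \<otimes>\<^bsub>red_aut_group d f\<^esub> B = proj_class (mat_mult (class_rep A) (class_rep B))"
  by (simp add: red_aut_group_def class_rep_def)

lemma class_rep_red_aut_group:
  fixes f :: "'a::field_char_0 poly"
  assumes "A \<in> carrier (red_aut_group d f)"
  shows "class_rep A \<in> A" "class_rep A \<in> form_stab d f" "A = proj_class (class_rep A)"
proof -
  obtain M where M: "M \<in> form_stab d f" "A = proj_class M"
    using assms by (auto simp: red_aut_group_def)
  then have "M \<in> A" using mem_proj_class by simp
  then show rep: "class_rep A \<in> A" unfolding class_rep_def by (rule someI)
  then obtain t where t: "t \<noteq> 0" "class_rep A = mat_scale t M" using M by (auto simp: in_proj_class_iff)
  then show "class_rep A \<in> form_stab d f" using form_stab_mat_scale[OF M(1) t(1)] by simp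
  show "A = proj_class (class_rep A)" using t M proj_class_mat_scale[OF t(1)] by simp
qed

lemma red_aut_group_mult_closed:
  fixes f :: "'a::field_char_0 poly"
  assumes "A \<in> carrier (red_aut_group d f)" "B \<in> carrier (red_aut_group d f)"
  shows "A \<otimes>\<^bsub>red_aut_group d f\<^esub> B \<in> carrier (red_aut_group d f)"
  unfolding red_aut_group_mult
  using imageI[OF form_stab_mat_mult[OF class_rep_red_aut_group(2)[OF assms(1)]
      class_rep_red_aut_group(2)[OF assms(2)]], of proj_class]
  by (simp add: red_aut_group_def)

lemma red_aut_group_one:
  fixes f :: "'a::field_char_0 poly"
  defines "E \<equiv> proj_class (1, 0, 0, 1)"
  shows "E \<in> carrier (red_aut_group d f)" "E \<otimes>\<^bsub>red_aut_group d f\<^esub> E = E"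
proof -
  show E: "E \<in> carrier (red_aut_group d f)"
    using imageI[OF form_stab_one, of proj_class d f] by (simp add: E_def red_aut_group_def)
  obtain t where t: "t \<noteq> 0" "class_rep E = mat_scale t (1, 0, 0, 1)"
    using class_rep_red_aut_group(1)[OF E] by (auto simp: E_def in_proj_class_iff)
  then have "mat_mult (class_rep E) (class_rep E) = mat_scale (t * t) (1, 0, 0, 1)"
    by (simp add: mat_mult_def mat_scale_def)
  then show "E \<otimes>\<^bsub>red_aut_group d f\<^esub> E = E"
    using t by (simp add: red_aut_group_mult proj_class_mat_scale E_def)
qed

lemma proj_rep_of_red_aut_group_iso:
  fixes f :: "'a::field_char_0 poly"
  assumes phi: "phi \<in> iso (red_aut_group d f) H" and H: "group H"
  defines "R \<equiv> \<lambda>s. class_rep (inv_into (carrier (red_aut_group d f)) phi s)"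
  shows "proj_rep H R" and "s \<in> carrier H \<Longrightarrow> R s \<in> form_stab d f"
proof -
  interpret H: group H by (rule H)
  let ?RA = "red_aut_group d f"
  let ?psi = "inv_into (carrier ?RA) phi"
  have bij: "bij_betw ?psi (carrier H) (carrier ?RA)"
    using phi by (simp add: iso_def bij_betw_inv_into)
  then have psi: "?psi s \<in> carrier ?RA" if "s \<in> carrier H" for s
    using that by (simp add: bij_betwE)
  have psi_mult: "?psi (s \<otimes>\<^bsub>H\<^esub> t) = proj_class (mat_mult (R s) (R t))"
    if "s \<in> carrier H" "t \<in> carrier H" for s t
    using iso_inv_into_mult[OF phi red_aut_group_mult_closed that]
    by (simp add: red_aut_group_mult R_def)
  have psi_one: "?psi \<one>\<^bsub>H\<^esub> = proj_class (1, 0, 0, 1)"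
    using iso_inv_into_one[OF phi H red_aut_group_one] .
  have R_class: "R s \<in> ?psi s" "?psi s = proj_class (R s)" if "s \<in> carrier H" for s
    using class_rep_red_aut_group[OF psi[OF that]] by (simp_all add: R_def)
  show stab: "R s \<in> form_stab d f" if "s \<in> carrier H" for s
    using class_rep_red_aut_group(2)[OF psi[OF that]] by (simp add: R_def)
  show "proj_rep H R"
  proof (unfold_locales)
    fix s assume s: "s \<in> carrier H"
    show "mat_det (R s) \<noteq> 0" using stab[OF s] by (simp add: form_stab_def)
    show "(\<exists>c. c \<noteq> 0 \<and> R s = mat_scale c (1, 0, 0, 1)) \<longleftrightarrow> s = \<one>\<^bsub>H\<^esub>"
    proof
      assume "\<exists>c. c \<noteq> 0 \<and> R s = mat_scale c (1, 0, 0, 1)"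
      then obtain c where "c \<noteq> 0" "R s = mat_scale c (1, 0, 0, 1)" by blast
      then have "?psi s = ?psi \<one>\<^bsub>H\<^esub>"
        using R_class(2)[OF s] psi_one proj_class_mat_scale[of c "(1, 0, 0, 1)"] by simp
      then show "s = \<one>\<^bsub>H\<^esub>"
        using bij s H.one_closed by (auto simp: bij_betw_def dest: inj_onD)
    next
      assume "s = \<one>\<^bsub>H\<^esub>"
      then show "\<exists>c. c \<noteq> 0 \<and> R s = mat_scale c (1, 0, 0, 1)"
        using R_class(1)[OF s] psi_one by (auto simp: in_proj_class_iff)
    qed
  next
    fix s t assume st: "s \<in> carrier H" "t \<in> carrier H"
    then have "R (s \<otimes>\<^bsub>H\<^esub> t) \<in> proj_class (mat_mult (R s) (R t))"
      using R_class(1)[OF H.m_closed[OF st]] psi_mult[OF st] by simp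
    then show "\<exists>c. c \<noteq> 0 \<and> R (s \<otimes>\<^bsub>H\<^esub> t) = mat_scale c (mat_mult (R s) (R t))"
      by (simp add: in_proj_class_iff)
  qed
qed

theorem lemma4p5:
  fixes f :: "'a::{alg_closed_field, field_char_0} poly" and g :: nat
  assumes "hyperelliptic g f"
    and "red_aut_group (2 * g + 2) f \<cong> alt_group 5"
  shows "I4 (2 * g + 2) f = 0 \<and> I4' (2 * g + 2) f = 0 \<and> I6 (2 * g + 2) f = 0 \<and>
         I6' (2 * g + 2) f = 0 \<and> I12 (2 * g + 2) f = 0"
proof -
  let ?d = "2 * g + 2"
  let ?F = "homog ?d f"
  have g: "2 \<le> g" using assms(1) by (simp add: hyperelliptic_def)
  obtain phi where phi: "phi \<in> iso (red_aut_group ?d f) (alt_group 5)"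
    using assms(2) by (auto simp: is_iso_def)
  define R where "R = (\<lambda>s. class_rep (inv_into (carrier (red_aut_group ?d f)) phi s))"
  have rep: "proj_rep (alt_group 5) R" and stab: "\<And>s. s \<in> carrier (alt_group 5) \<Longrightarrow> R s \<in> form_stab ?d f"
    using proj_rep_of_red_aut_group_iso[OF phi alt_group_is_group] by (simp_all add: R_def)
  have "transvectant ?d ?d (?d - 2 * k) ?F ?F = 0" if k: "k = 1 \<or> k = 2" for k
  proof (rule semi_invariant_form_eq_0[OF rep order_alt_group_5 alt_group_5_element_order])
    show "homogeneous (4 * k) (transvectant ?d ?d (?d - 2 * k) ?F ?F)"
      using k g by (intro homogeneous_transvectant_homog) auto
    show "1 \<le> 4 * k" "4 * k \<le> 8" using k by auto
    show "\<exists>\<mu>. mat_subst (R s) (transvectant ?d ?d (?d - 2 * k) ?F ?F) =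
                smult [:\<mu>:] (transvectant ?d ?d (?d - 2 * k) ?F ?F)"
      if "s \<in> carrier (alt_group 5)" for s
      using form_stab_transvectant_semi_invariant[OF stab[OF that]] by simp
  qed
  from this[of 1] this[of 2] have "J4 ?d f = 0" "J8 ?d f = 0" by (simp_all add: J4_def J8_def)
  then show ?thesis
    by (simp add: I4_def I4'_def I6_def I6'_def I12_def FJ4_def FJ8_def Mform_def
        transvectant_0_left transvectant_0_right)
qed

end
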